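(* Let $N$ be an outer-labeled planar semi-directed network on $X$. Then $\mathrm{Split}(\mathcal T(N))$ is a circular split system congruent with every circular order of $X$ induced by $N$.
   Context: A (binary) rooted phylogenetic network on $X$ is a rooted DAG whose root has in-degree 0, out-degree 2, whose leaves (in-degree 1, out-degree 0) are bijectively labeled by $X$, and whose other nodes have (in,out)-degree $(1,2)$ (tree nodes) or $(2,1)$ (hybrid nodes), with the root being the least stable ancestor of $X$. Edges into hybrid nodes are hybrid edges. A semi-directed network is obtained by undirecting all non-hybrid edges and suppressing the root. It is outer-labeled planar if it has a planar embedding with all leaves on the unbounded face; such an embedding lists the leaves around the unbounded face in a circular order, and any circular order arising this way is said to be induced by $N$. A phylogenetic tree is a semi-directed network without hybrid nodes; $T$ is displayed by $N$ if it is obtained by deleting one hybrid edge per hybrid node, then repeatedly deleting unlabeled leaves and suppressing degree-2 nodes; $\mathcal T(N)$ is the set of displayed trees. $\mathrm{Split}(T)$ is the set of bipartitions of $X$ induced by edges of $T$, and $\mathrm{Split}(\mathcal T(N))=\bigcup_{T\in\mathcal T(N)}\mathrm{Split}(T)$. For a circular order $\mathcal C=(x_0,\dots,x_n=x_0)$ (indices mod $n$) and $i\ne j$, $S_{ij}=\{x_{i+1},\dots,x_j\}|\{x_{j+1},\dots,x_i\}$; a split system is circular and congruent with $\mathcal C$ if all its splits are of the form $S_{ij}$ for $\mathcal C$. *)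

theory Defs
  imports "HOL-Analysis.Analysis"
begin

text \<open>A network is given by a finite vertex set V, a set of arcs A (pairs (u,v) meaning u -> v),
  a root r and the leaf set X (leaves are identified with their labels).\<close>

definition indeg :: "('v \<times> 'v) set \<Rightarrow> 'v \<Rightarrow> nat" where
  "indeg A v = card {u. (u, v) \<in> A}"

definition outdeg :: "('v \<times> 'v) set \<Rightarrow> 'v \<Rightarrow> nat" where
  "outdeg A v = card {w. (v, w) \<in> A}"

definition rooted_network :: "'v set \<Rightarrow> ('v \<times> 'v) set \<Rightarrow> 'v \<Rightarrow> 'v set \<Rightarrow> bool" where
  "rooted_network V A r X \<longleftrightarrow>
     finite V \<and> A \<subseteq> V \<times> V \<and> (\<forall>v. (v, v) \<notin> A\<^sup>+) \<and>
     r \<in> V \<and> indeg A r = 0 \<and> outdeg A r = 2 \<and>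
     X = {v \<in> V. indeg A v = 1 \<and> outdeg A v = 0} \<and>
     (\<forall>v \<in> V - {r}. (indeg A v, outdeg A v) \<in> {(1, 0), (1, 2), (2, 1)}) \<and>
     \<comment> \<open>the root is the least stable ancestor of X: no other vertex lies on all
         root-to-leaf paths\<close>
     (\<forall>v \<in> V - {r}. \<exists>x \<in> X. (r, x) \<in> (A \<inter> ((- {v}) \<times> (- {v})))\<^sup>*)"

definition hybrid_edges :: "('v \<times> 'v) set \<Rightarrow> ('v \<times> 'v) set" where
  "hybrid_edges A = {(u, v) \<in> A. indeg A v = 2}"

text \<open>Underlying undirected graph (edges as 2-element sets).  Undirecting the non-hybrid
  edges does not change the underlying graph; hybrid edges keep their direction only
  through the set hybrid_edges.\<close>

definition und_edges :: "('v \<times> 'v) set \<Rightarrow> 'v set set" where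
  "und_edges A = {{u, v} | u v. (u, v) \<in> A}"

definition deletion_choice :: "('v \<times> 'v) set \<Rightarrow> ('v \<times> 'v) set \<Rightarrow> bool" where
  "deletion_choice A D \<longleftrightarrow> D \<subseteq> hybrid_edges A \<and>
     (\<forall>h. indeg A h = 2 \<longrightarrow> card {u. (u, h) \<in> D} = 1)"

definition prune_step :: "'v set \<Rightarrow> ('v set \<times> 'v set set) \<Rightarrow> ('v set \<times> 'v set set) \<Rightarrow> bool" where
  "prune_step X G G' \<longleftrightarrow> (\<exists>v e. v \<in> fst G \<and> v \<notin> X \<and> {f \<in> snd G. v \<in> f} = {e} \<and>
      G' = (fst G - {v}, snd G - {e}))"

definition suppress_step :: "'v set \<Rightarrow> ('v set \<times> 'v set set) \<Rightarrow> ('v set \<times> 'v set set) \<Rightarrow> bool" where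
  "suppress_step X G G' \<longleftrightarrow> (\<exists>v a b. v \<in> fst G \<and> v \<notin> X \<and> a \<noteq> b \<and> a \<noteq> v \<and> b \<noteq> v \<and>
      {f \<in> snd G. v \<in> f} = {{a, v}, {v, b}} \<and>
      G' = (fst G - {v}, (snd G - {{a, v}, {v, b}}) \<union> {{a, b}}))"

definition reduce_step :: "'v set \<Rightarrow> ('v set \<times> 'v set set) \<Rightarrow> ('v set \<times> 'v set set) \<Rightarrow> bool" where
  "reduce_step X G G' \<longleftrightarrow> prune_step X G G' \<or> suppress_step X G G'"

definition displayed_tree :: "'v set \<Rightarrow> ('v \<times> 'v) set \<Rightarrow> 'v set \<Rightarrow> ('v set \<times> 'v set set) \<Rightarrow> bool" where
  "displayed_tree V A X T \<longleftrightarrow> (\<exists>D. deletion_choice A D \<and>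
      (reduce_step X)\<^sup>*\<^sup>* (V, und_edges (A - D)) T \<and> \<not> (\<exists>T'. reduce_step X T T'))"

definition edge_rel :: "'v set set \<Rightarrow> ('v \<times> 'v) set" where
  "edge_rel F = {(a, b). {a, b} \<in> F}"

definition component :: "'v set set \<Rightarrow> 'v \<Rightarrow> 'v set" where
  "component F u = {w. (u, w) \<in> (edge_rel F)\<^sup>*}"

text \<open>Splits are bipartitions, represented as the unordered pair of their two sides.\<close>

definition tree_splits :: "'v set \<Rightarrow> ('v set \<times> 'v set set) \<Rightarrow> 'v set set set" where
  "tree_splits X T = {{X \<inter> component (snd T - {e}) u, X - component (snd T - {e}) u} | e u.
      e \<in> snd T \<and> u \<in> e}"

definition displayed_splits :: "'v set \<Rightarrow> ('v \<times> 'v) set \<Rightarrow> 'v set \<Rightarrow> 'v set set set" where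
  "displayed_splits V A X = \<Union> {tree_splits X T | T. displayed_tree V A X T}"

definition circular_order :: "'v set \<Rightarrow> 'v list \<Rightarrow> bool" where
  "circular_order X xs \<longleftrightarrow> distinct xs \<and> set xs = X"

text \<open>For xs = [x_0, ..., x_(n-1)] (indices mod n): the side x_(i+1), ..., x_j.\<close>

definition circ_part :: "'v list \<Rightarrow> nat \<Rightarrow> nat \<Rightarrow> 'v set" where
  "circ_part xs i j = {xs ! (k mod length xs) | k.
      i < k \<and> k \<le> (if i < j then j else j + length xs)}"

definition circ_split :: "'v list \<Rightarrow> nat \<Rightarrow> nat \<Rightarrow> 'v set set" where
  "circ_split xs i j = {circ_part xs i j, set xs - circ_part xs i j}"

definition congruent :: "'v set set set \<Rightarrow> 'v list \<Rightarrow> bool" where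
  "congruent S xs \<longleftrightarrow> (\<forall>s \<in> S. \<exists>i j. i < length xs \<and> j < length xs \<and> i \<noteq> j \<and>
      s = circ_split xs i j)"

definition circular_split_system :: "'v set \<Rightarrow> 'v set set set \<Rightarrow> bool" where
  "circular_split_system X S \<longleftrightarrow> (\<exists>xs. circular_order X xs \<and> congruent S xs)"

text \<open>The circular order xs of the leaves is induced by the
  embedding if the drawing lies inside a disc of radius R and the leaves can be joined by
  pairwise disjoint arcs, running through the complement of the drawing (hence through the
  unbounded face), to points of the circle of radius R met in the (counterclockwise)
  order xs.\<close>

definition induces_circular_order :: "'v set \<Rightarrow> 'v set set \<Rightarrow> 'v list \<Rightarrow> bool" where
  "induces_circular_order V E xs \<longleftrightarrow>
    (\<exists>(pos :: 'v \<Rightarrow> complex) (\<gamma> :: 'v set \<Rightarrow> real \<Rightarrow> complex)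
       (\<delta> :: nat \<Rightarrow> real \<Rightarrow> complex) (R :: real) (\<theta> :: nat \<Rightarrow> real).
      inj_on pos V \<and>
      (\<forall>e \<in> E. arc (\<gamma> e) \<and> {pathstart (\<gamma> e), pathfinish (\<gamma> e)} = pos ` e) \<and>
      (\<forall>e \<in> E. \<forall>v \<in> V. pos v \<in> path_image (\<gamma> e) \<longrightarrow> v \<in> e) \<and>
      (\<forall>e \<in> E. \<forall>e' \<in> E. e \<noteq> e' \<longrightarrow>
          path_image (\<gamma> e) \<inter> path_image (\<gamma> e') \<subseteq> pos ` (e \<inter> e')) \<and>
      pos ` V \<union> (\<Union>e \<in> E. path_image (\<gamma> e)) \<subseteq> ball 0 R \<and>
      (\<forall>k < length xs. arc (\<delta> k) \<and> pathstart (\<delta> k) = pos (xs ! k) \<and>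
          pathfinish (\<delta> k) = complex_of_real R * cis (\<theta> k) \<and>
          path_image (\<delta> k) \<inter> (pos ` V \<union> (\<Union>e \<in> E. path_image (\<gamma> e))) = {pos (xs ! k)} \<and>
          path_image (\<delta> k) - {pathfinish (\<delta> k)} \<subseteq> ball 0 R \<and>
          0 \<le> \<theta> k \<and> \<theta> k < 2 * pi) \<and>
      (\<forall>k l. k < l \<and> l < length xs \<longrightarrow>
          path_image (\<delta> k) \<inter> path_image (\<delta> l) = {} \<and> \<theta> k < \<theta> l))"

text \<open>The embedded graph
  is the underlying graph of the semi-directed network; we keep the (degree-2, unlabeled) root
  as a subdivision vertex instead of suppressing it, which changes neither the embeddings up to
  subdivision nor the induced circular orders.\<close>

definition induced_circular_order :: "'v set \<Rightarrow> ('v \<times> 'v) set \<Rightarrow> 'v set \<Rightarrow> 'v list \<Rightarrow> bool" where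
  "induced_circular_order V A X xs \<longleftrightarrow>
     circular_order X xs \<and> induces_circular_order V (und_edges A) xs"

definition outer_labeled_planar :: "'v set \<Rightarrow> ('v \<times> 'v) set \<Rightarrow> 'v set \<Rightarrow> bool" where
  "outer_labeled_planar V A X \<longleftrightarrow> (\<exists>xs. induced_circular_order V A X xs)"

end

theory Submission
  imports Defs
begin

(*
  Deleting one parent edge of every hybrid node leaves a spanning tree of the network, and
  pruning unlabelled leaves or suppressing degree-2 vertices only loses splits. So every split
  of a displayed tree is cut out of such a spanning tree by a single edge and has leaves on both
  sides, and each side is connected by edges of the network. If the sides interlaced along an
  induced circular order, with leaves a, c on one side and b, d on the other in the order
  a, b, c, d, then the paths joining a to c and b to d inside the drawing, extended to the
  bounding circle along the outer arcs of the four leaves, would be disjoint paths in a disc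
  joining interlaced points of its boundary. This is impossible by Fashoda's interlace theorem
  (after a Cayley transform of the disc onto the upper half plane). A bipartition of a circular
  order without interlaced pairs cuts it into two intervals, i.e. it is a split S_ij.
*)

section \<open>Paths crossing in a disc\<close>

definition cayley_disc :: "complex \<Rightarrow> complex \<Rightarrow> complex" where
  "cayley_disc q z = \<i> * (q + z) / (q - z)"

lemma cayley_disc_cis:
  assumes q: "q \<noteq> 0" and p: "cos p \<noteq> 1"
  shows "cayley_disc q (q * cis p) = complex_of_real (- sin p / (1 - cos p))"
proof -
  have cis_ne: "cis p \<noteq> 1"
    using p by (auto simp: complex_eq_iff)
  have cos_ne: "1 - cos p \<noteq> 0"
    using p by simp
  have "cayley_disc q (q * cis p) = \<i> * (1 + cis p) / (1 - cis p)"
    using q cis_ne by (simp add: cayley_disc_def field_simps)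
  moreover have "\<i> * (1 + cis p) = complex_of_real (- sin p / (1 - cos p)) * (1 - cis p)"
  proof -
    have "sin p * sin p / (1 - cos p) = 1 + cos p"
      using cos_ne sin_squared_eq[of p] by (simp add: field_simps power2_eq_square)
    then show ?thesis
      using cos_ne by (simp add: complex_eq_iff field_simps)
  qed
  ultimately show ?thesis
    using cis_ne by simp
qed

lemma Im_cayley_disc_nonneg:
  assumes "norm z \<le> norm q" "z \<noteq> q"
  shows "0 \<le> Im (cayley_disc q z)"
proof -
  have "(Re z)\<^sup>2 + (Im z)\<^sup>2 \<le> (Re q)\<^sup>2 + (Im q)\<^sup>2"
    using assms(1) by (simp add: cmod_def)
  then have "0 \<le> (Re q + Re z) * (Re q - Re z) + (Im q + Im z) * (Im q - Im z)"
    by (simp add: algebra_simps power2_eq_square)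
  moreover have "Im (cayley_disc q z) =
      ((Re q + Re z) * (Re q - Re z) + (Im q + Im z) * (Im q - Im z)) /
      ((Re q - Re z)\<^sup>2 + (Im q - Im z)\<^sup>2)"
    by (simp add: cayley_disc_def Im_divide power2_eq_square algebra_simps)
  ultimately show ?thesis
    by simp
qed

lemma inj_on_cayley_disc:
  assumes "q \<noteq> 0"
  shows "inj_on (cayley_disc q) (- {q})"
proof (rule inj_onI)
  fix x y
  assume "x \<in> - {q}" "y \<in> - {q}" and "cayley_disc q x = cayley_disc q y"
  then have "(q + x) * (q - y) = (q + y) * (q - x)"
    by (simp add: cayley_disc_def field_simps)
  then have "2 * q * x = 2 * q * y"
    by (simp add: algebra_simps)
  then show "x = y"
    using assms by simp
qed

lemma continuous_on_cayley_disc: "continuous_on (- {q}) (cayley_disc q)"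
  unfolding cayley_disc_def by (intro continuous_intros) auto

lemma cos_neq_1_in_open_period:
  fixes x :: real
  assumes "0 < x" "x < 2 * pi"
  shows "cos x \<noteq> 1"
proof
  assume "cos x = 1"
  then obtain n :: int where "x = real_of_int n * 2 * pi"
    using cos_one_2pi_int by blast
  with assms have "0 < n" "n < 1"
    by (simp_all add: zero_less_mult_iff)
  then show False
    by simp
qed

lemma neg_sin_div_one_minus_cos_double:
  fixes t :: real
  assumes "sin t \<noteq> 0"
  shows "- sin (2 * t) / (1 - cos (2 * t)) = - cos t / sin t"
proof -
  have "- sin (2 * t) / (1 - cos (2 * t)) = - (2 * sin t * cos t) / (2 * (sin t)\<^sup>2)"
    by (simp add: cos_double_sin sin_double)
  also have "\<dots> = - cos t / sin t"
    using assms by (simp add: field_simps power2_eq_square)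
  finally show ?thesis .
qed

lemma neg_sin_div_one_minus_cos_strict_mono:
  fixes a b :: real
  assumes "0 < a" "a < b" "b < 2 * pi"
  shows "- sin a / (1 - cos a) < - sin b / (1 - cos b)"
proof -
  have "0 < a / 2" "a / 2 < b / 2" "b / 2 < pi"
    using assms by auto
  then have pos: "0 < sin (a / 2)" "0 < sin (b / 2)" "0 < sin (b / 2 - a / 2)"
    by (auto intro!: sin_gt_zero)
  then have "cos (b / 2) * sin (a / 2) < cos (a / 2) * sin (b / 2)"
    by (simp add: sin_diff mult.commute)
  then have "- cos (a / 2) / sin (a / 2) < - cos (b / 2) / sin (b / 2)"
    using pos by (simp add: field_simps)
  then show ?thesis
    using neg_sin_div_one_minus_cos_double[of "a / 2"] neg_sin_div_one_minus_cos_double[of "b / 2"] pos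
    by simp
qed

definition vec2_of_complex :: "complex \<Rightarrow> real^2" where
  "vec2_of_complex z = vector [Re z, Im z]"

lemma continuous_on_vec2_of_complex: "continuous_on S vec2_of_complex"
proof -
  have "vec2_of_complex = (\<lambda>z. \<chi> i. if i = 1 then Re z else Im z)"
    unfolding vec2_of_complex_def by (auto simp: vec_eq_iff forall_2)
  moreover have "continuous_on S (\<lambda>z. \<chi> i::2. if i = 1 then Re z else Im z)"
  proof (rule continuous_on_vec_lambda)
    show "continuous_on S (\<lambda>z. if i = 1 then Re z else Im z)" for i :: 2
      by (cases "i = 1") (auto intro!: continuous_intros)
  qed
  ultimately show ?thesis
    by metis
qed

lemma inj_vec2_of_complex: "inj vec2_of_complex"
  by (rule injI) (metis vec2_of_complex_def complex_eqI vector_2)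

lemma upper_half_plane_paths_intersect:
  fixes f g :: "real \<Rightarrow> complex"
  assumes "path f" "path g"
    and upper: "path_image f \<subseteq> {z. 0 \<le> Im z}" "path_image g \<subseteq> {z. 0 \<le> Im z}"
    and ends: "pathstart f = of_real s1" "pathstart g = of_real s2"
      "pathfinish f = of_real s3" "pathfinish g = of_real s4"
    and order: "s1 < s2" "s2 < s3" "s3 < s4"
  shows "path_image f \<inter> path_image g \<noteq> {}"
proof -
  define F G where "F = vec2_of_complex \<circ> f" and "G = vec2_of_complex \<circ> g"
  have "path F" "path G"
    unfolding F_def G_def using assms(1,2)
    by (auto intro!: path_continuous_image continuous_on_vec2_of_complex)
  obtain B where B: "\<And>z. z \<in> path_image f \<union> path_image g \<Longrightarrow> norm z \<le> B"
    using compact_imp_bounded[OF compact_Un[OF compact_path_image compact_path_image]] assms(1,2)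
    by (meson bounded_iff)
  define a b :: "real^2" where "a = vector [- B, 0]" and "b = vector [B, B]"
  have "vec2_of_complex z \<in> cbox a b" if "z \<in> path_image f \<union> path_image g" for z
    using B[OF that] upper that abs_Re_le_cmod[of z] abs_Im_le_cmod[of z]
    by (auto simp: mem_box_cart forall_2 a_def b_def vec2_of_complex_def)
  then have "path_image F \<subseteq> cbox a b" "path_image G \<subseteq> cbox a b"
    by (auto simp: F_def G_def path_image_compose)
  then obtain w where "w \<in> path_image F" "w \<in> path_image G"
    by (rule fashoda_interlace[OF \<open>path F\<close> \<open>path G\<close>])
       (use ends order in \<open>simp_all add: F_def G_def a_def vec2_of_complex_def
          pathstart_compose pathfinish_compose\<close>)
  then show ?thesis
    using inj_vec2_of_complex by (auto simp: F_def G_def path_image_compose dest: injD)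
qed

lemma cayley_disc_circle:
  assumes "0 < R" "0 < t - \<alpha>" "t - \<alpha> < 2 * pi"
  shows "of_real R * cis t \<noteq> of_real R * cis \<alpha>"
    "cayley_disc (of_real R * cis \<alpha>) (of_real R * cis t) =
      of_real (- sin (t - \<alpha>) / (1 - cos (t - \<alpha>)))"
proof -
  have circle: "of_real R * cis t = of_real R * cis \<alpha> * cis (t - \<alpha>)"
    by (simp add: cis_mult)
  have "cos (t - \<alpha>) \<noteq> 1"
    using cos_neq_1_in_open_period assms(2,3) .
  then have "cis (t - \<alpha>) \<noteq> 1"
    by (auto simp: complex_eq_iff)
  with \<open>0 < R\<close> show "of_real R * cis t \<noteq> of_real R * cis \<alpha>"
    unfolding circle by simp
  show "cayley_disc (of_real R * cis \<alpha>) (of_real R * cis t) =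
      of_real (- sin (t - \<alpha>) / (1 - cos (t - \<alpha>)))"
    unfolding circle using \<open>0 < R\<close> \<open>cos (t - \<alpha>) \<noteq> 1\<close> by (simp add: cayley_disc_cis)
qed

lemma disc_paths_intersect:
  fixes f g :: "real \<Rightarrow> complex"
  assumes "0 < R" and t: "0 \<le> t1" "t1 < t2" "t2 < t3" "t3 < t4" "t4 < 2 * pi"
    and "path f" "path g"
    and f_ends: "pathstart f = of_real R * cis t1" "pathfinish f = of_real R * cis t3"
    and g_ends: "pathstart g = of_real R * cis t2" "pathfinish g = of_real R * cis t4"
    and f_inside: "path_image f \<subseteq> ball 0 R \<union> {pathstart f, pathfinish f}"
    and g_inside: "path_image g \<subseteq> ball 0 R \<union> {pathstart g, pathfinish g}"
  shows "path_image f \<inter> path_image g \<noteq> {}"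
proof -
  \<comment> \<open>q lies on the circle outside the arc from t1 to t4, so the Cayley transform at q
      keeps the order of the four endpoints.\<close>
  define \<alpha> where "\<alpha> = (t1 + t4) / 2 - pi"
  define q where "q = of_real R * cis \<alpha>"
  define m where "m t = - sin (t - \<alpha>) / (1 - cos (t - \<alpha>))" for t
  have phase: "0 < t - \<alpha>" "t - \<alpha> < 2 * pi" if "t1 \<le> t" "t \<le> t4" for t
    using that t by (auto simp: \<alpha>_def field_simps)
  note on_arc = cayley_disc_circle[OF \<open>0 < R\<close> phase, folded q_def m_def]
  have m_mono: "m t < m t'" if "t1 \<le> t" "t < t'" "t' \<le> t4" for t t'
    unfolding m_def using that phase[of t] phase[of t']
    by (intro neg_sin_div_one_minus_cos_strict_mono) auto
  have "norm q = R" "q \<noteq> 0"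
    using \<open>0 < R\<close> by (auto simp: q_def norm_mult)
  then have in_disc: "path_image f \<subseteq> cball 0 R - {q}" "path_image g \<subseteq> cball 0 R - {q}"
    using f_inside g_inside f_ends g_ends on_arc(1)[of t1] on_arc(1)[of t2] on_arc(1)[of t3]
      on_arc(1)[of t4] t \<open>0 < R\<close>
    by (auto simp: norm_mult)
  have cont: "continuous_on (cball 0 R - {q}) (cayley_disc q)"
    by (rule continuous_on_subset[OF continuous_on_cayley_disc]) auto
  have "path_image (cayley_disc q \<circ> f) \<inter> path_image (cayley_disc q \<circ> g) \<noteq> {}"
  proof (rule upper_half_plane_paths_intersect)
    show "path (cayley_disc q \<circ> f)" "path (cayley_disc q \<circ> g)"
      using \<open>path f\<close> \<open>path g\<close> in_disc
      by (auto intro!: path_continuous_image continuous_on_subset[OF cont])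
    show "path_image (cayley_disc q \<circ> f) \<subseteq> {z. 0 \<le> Im z}"
      "path_image (cayley_disc q \<circ> g) \<subseteq> {z. 0 \<le> Im z}"
      using in_disc \<open>norm q = R\<close>
      by (auto simp: path_image_compose intro!: Im_cayley_disc_nonneg)
    show "pathstart (cayley_disc q \<circ> f) = of_real (m t1)"
      "pathstart (cayley_disc q \<circ> g) = of_real (m t2)"
      "pathfinish (cayley_disc q \<circ> f) = of_real (m t3)"
      "pathfinish (cayley_disc q \<circ> g) = of_real (m t4)"
      using f_ends g_ends t on_arc(2) by (simp_all add: pathstart_compose pathfinish_compose)
    show "m t1 < m t2" "m t2 < m t3" "m t3 < m t4"
      using t by (auto intro: m_mono)
  qed
  moreover have "inj_on (cayley_disc q) (path_image f \<union> path_image g)"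
    using in_disc by (auto intro: inj_on_subset[OF inj_on_cayley_disc[OF \<open>q \<noteq> 0\<close>]])
  ultimately show ?thesis
    by (auto simp: path_image_compose dest: inj_onD)
qed

lemma edge_rel_iff: "(a, b) \<in> edge_rel F \<longleftrightarrow> {a, b} \<in> F"
  by (simp add: edge_rel_def)

lemma sym_edge_rel: "sym (edge_rel F)"
  by (auto simp: sym_def edge_rel_def insert_commute)

lemma rtrancl_edge_rel_sym: "(a, b) \<in> (edge_rel F)\<^sup>* \<Longrightarrow> (b, a) \<in> (edge_rel F)\<^sup>*"
  by (rule symD[OF sym_rtrancl[OF sym_edge_rel]])

lemma rtrancl_edge_rel_join:
  "(a, w) \<in> (edge_rel F)\<^sup>* \<Longrightarrow> (b, w) \<in> (edge_rel F)\<^sup>* \<Longrightarrow> (a, b) \<in> (edge_rel F)\<^sup>*"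
  using rtrancl_trans[OF _ rtrancl_edge_rel_sym] .

lemma rtrancl_edge_rel_mono:
  assumes "(a, b) \<in> (edge_rel F)\<^sup>*" "F \<subseteq> F'"
  shows "(a, b) \<in> (edge_rel F')\<^sup>*"
proof -
  have "edge_rel F \<subseteq> edge_rel F'"
    using assms(2) by (auto simp: edge_rel_def)
  with assms(1) show ?thesis
    using rtrancl_mono by blast
qed

lemma rtrancl_edge_rel_into_rtrancl:
  "(a, b) \<in> (edge_rel F)\<^sup>* \<Longrightarrow> {b, c} \<in> F \<Longrightarrow> (a, c) \<in> (edge_rel F)\<^sup>*"
  by (auto intro: rtrancl_into_rtrancl simp: edge_rel_iff)

lemma mem_component_iff: "w \<in> component F u \<longleftrightarrow> (u, w) \<in> (edge_rel F)\<^sup>*"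
  by (simp add: component_def)

lemma component_mono:
  assumes "F \<subseteq> F'"
  shows "component F u \<subseteq> component F' u"
  using rtrancl_edge_rel_mono[OF _ assms, of u] by (auto simp: mem_component_iff)

lemma component_subset_insert:
  assumes "\<forall>g\<in>F. g \<subseteq> W"
  shows "component F u \<subseteq> insert u W"
proof
  fix w
  assume "w \<in> component F u"
  then have "(u, w) \<in> (edge_rel F)\<^sup>*"
    by (simp add: mem_component_iff)
  then show "w \<in> insert u W"
    by (induction rule: rtrancl_induct) (use assms in \<open>auto simp: edge_rel_iff\<close>)
qed

lemma rtrancl_edge_rel_remove_pendant:
  assumes pendant: "\<forall>g\<in>F. v \<in> g \<longrightarrow> g = {v, y}"
    and "(u, w) \<in> (edge_rel F)\<^sup>*" "u \<noteq> v" "w \<noteq> v"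
  shows "(u, w) \<in> (edge_rel (F - {{v, y}}))\<^sup>*"
proof -
  have "(u, if w = v then y else w) \<in> (edge_rel (F - {{v, y}}))\<^sup>*"
    using \<open>(u, w) \<in> _\<close>
  proof (induction rule: rtrancl_induct)
    case base
    then show ?case
      using \<open>u \<noteq> v\<close> by simp
  next
    case (step w1 w2)
    have "{w1, w2} \<in> F"
      using step.hyps(2) by (simp add: edge_rel_iff)
    have "v \<in> {w1, w2} \<longrightarrow> {w1, w2} = {v, y}"
      using pendant \<open>{w1, w2} \<in> F\<close> by (rule bspec)
    then consider "{w1, w2} = {v, y}" | "v \<notin> {w1, w2}"
      by argo
    then show ?case
    proof cases
      case 1
      then have "w1 = v \<and> w2 = y \<or> w1 = y \<and> w2 = v \<or> w1 = v \<and> w2 = v"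
        by (auto simp: doubleton_eq_iff)
      then show ?thesis
        using step.IH by auto
    next
      case 2
      then have "(u, w1) \<in> (edge_rel (F - {{v, y}}))\<^sup>*"
        using step.IH by (auto split: if_splits)
      moreover have "{w1, w2} \<in> F - {{v, y}}"
        using 2 \<open>{w1, w2} \<in> F\<close> by auto
      ultimately have "(u, w2) \<in> (edge_rel (F - {{v, y}}))\<^sup>*"
        by (rule rtrancl_edge_rel_into_rtrancl)
      then show ?thesis
        using 2 by auto
    qed
  qed
  then show ?thesis
    using \<open>w \<noteq> v\<close> by simp
qed

lemma rtrancl_edge_rel_remove_unreachable:
  assumes "(z, w) \<in> (edge_rel F)\<^sup>*" "(z, x) \<notin> (edge_rel F)\<^sup>*" "x \<in> f"
  shows "(z, w) \<in> (edge_rel (F - {f}))\<^sup>*"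
  using assms(1)
proof (induction rule: rtrancl_induct)
  case base
  then show ?case
    by simp
next
  case (step w1 w2)
  have "(z, w2) \<in> (edge_rel F)\<^sup>*"
    using step.hyps by (rule rtrancl_into_rtrancl)
  then have "w1 \<noteq> x" "w2 \<noteq> x"
    using step.hyps(1) assms(2) by auto
  then have "{w1, w2} \<in> F - {f}"
    using step.hyps(2) assms(3) by (auto simp: edge_rel_iff)
  then show ?case
    by (rule rtrancl_edge_rel_into_rtrancl[OF step.IH])
qed

lemma rtrancl_edge_rel_remove_edge_cases:
  assumes "(u0, w) \<in> (edge_rel F)\<^sup>*"
  shows "(u0, w) \<in> (edge_rel (F - {{u0, u1}}))\<^sup>* \<or> (u1, w) \<in> (edge_rel (F - {{u0, u1}}))\<^sup>*"
  using assms
proof (induction rule: rtrancl_induct)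
  case base
  then show ?case
    by simp
next
  case (step w1 w2)
  show ?case
  proof (cases "{w1, w2} = {u0, u1}")
    case True
    then show ?thesis
      by (auto simp: doubleton_eq_iff)
  next
    case False
    then have "{w1, w2} \<in> F - {{u0, u1}}"
      using step.hyps(2) by (simp add: edge_rel_iff)
    then show ?thesis
      using step.IH rtrancl_edge_rel_into_rtrancl[of u0 w1] rtrancl_edge_rel_into_rtrancl[of u1 w1]
      by blast
  qed
qed

lemma rtrancl_edge_rel_remove_edge_iff:
  fixes F :: "'a set set" and u0 u1 :: 'a
  assumes "(u0, p) \<in> (edge_rel F)\<^sup>*" "(u0, q) \<in> (edge_rel F)\<^sup>*"
  defines "C \<equiv> component (F - {{u0, u1}}) u0"
  shows "(p, q) \<in> (edge_rel (F - {{u0, u1}}))\<^sup>* \<longleftrightarrow> (p \<in> C \<longleftrightarrow> q \<in> C)"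
proof
  assume pq: "(p, q) \<in> (edge_rel (F - {{u0, u1}}))\<^sup>*"
  then have "(q, p) \<in> (edge_rel (F - {{u0, u1}}))\<^sup>*"
    by (rule rtrancl_edge_rel_sym)
  with pq show "p \<in> C \<longleftrightarrow> q \<in> C"
    unfolding C_def mem_component_iff using rtrancl_trans[of u0 p _ q] rtrancl_trans[of u0 q _ p]
    by blast
next
  assume same_side: "p \<in> C \<longleftrightarrow> q \<in> C"
  obtain w where "(w, p) \<in> (edge_rel (F - {{u0, u1}}))\<^sup>*" "(w, q) \<in> (edge_rel (F - {{u0, u1}}))\<^sup>*"
  proof (cases "p \<in> C")
    case True
    then show ?thesis
      using that[of u0] same_side by (simp add: C_def mem_component_iff)
  next
    case False
    then show ?thesis
      using that[of u1] same_side rtrancl_edge_rel_remove_edge_cases[of u0 p F u1, OF assms(1)]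
        rtrancl_edge_rel_remove_edge_cases[of u0 q F u1, OF assms(2)]
      by (simp add: C_def mem_component_iff)
  qed
  then show "(p, q) \<in> (edge_rel (F - {{u0, u1}}))\<^sup>*"
    by (rule rtrancl_trans[OF rtrancl_edge_rel_sym])
qed

section \<open>Forests and their reduction\<close>

definition forest :: "'v set \<Rightarrow> 'v set set \<Rightarrow> bool" where
  "forest W F \<longleftrightarrow> finite W \<and> (\<forall>g\<in>F. g \<subseteq> W \<and> card g = 2) \<and>
     (\<forall>x y. {x, y} \<in> F \<longrightarrow> (x, y) \<notin> (edge_rel (F - {{x, y}}))\<^sup>*)"

lemma forest_edgeD: "forest W F \<Longrightarrow> g \<in> F \<Longrightarrow> g \<subseteq> W \<and> card g = 2"
  by (simp add: forest_def)

lemma forest_bridge: "forest W F \<Longrightarrow> {x, y} \<in> F \<Longrightarrow> (x, y) \<notin> (edge_rel (F - {{x, y}}))\<^sup>*"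
  by (simp add: forest_def)

lemma forest_edge_obtain:
  assumes "forest W F" "g \<in> F" "v \<in> g"
  obtains y where "g = {v, y}" "y \<noteq> v"
proof -
  obtain a b where "g = {a, b}" "a \<noteq> b"
    using forest_edgeD[OF assms(1,2)] card_2_iff by metis
  with assms(3) that show thesis
    by (auto simp: insert_commute)
qed

lemma forest_subgraph:
  assumes "forest W F" "finite W'" "F' \<subseteq> F" "\<forall>g\<in>F'. g \<subseteq> W'"
  shows "forest W' F'"
  unfolding forest_def
proof (intro conjI allI impI ballI)
  show "finite W'"
    by fact
next
  fix g
  assume "g \<in> F'"
  then show "g \<subseteq> W'" "card g = 2"
    using assms forest_edgeD by blast+
next
  fix x y
  assume "{x, y} \<in> F'"
  show "(x, y) \<notin> (edge_rel (F' - {{x, y}}))\<^sup>*"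
  proof
    assume "(x, y) \<in> (edge_rel (F' - {{x, y}}))\<^sup>*"
    then have "(x, y) \<in> (edge_rel (F - {{x, y}}))\<^sup>*"
      by (rule rtrancl_edge_rel_mono) (use assms(3) in auto)
    with forest_bridge[OF assms(1)] \<open>{x, y} \<in> F'\<close> assms(3) show False
      by blast
  qed
qed

lemma tree_splits_memI:
  assumes "f \<in> snd T" "u \<in> f" "X \<inter> C = X \<inter> component (snd T - {f}) u"
  shows "{X \<inter> C, X - C} \<in> tree_splits X T"
proof -
  have "X - C = X - component (snd T - {f}) u"
    using assms(3) by blast
  then show ?thesis
    using assms unfolding tree_splits_def by blast
qed

lemma tree_splits_prune:
  assumes "forest W F" "v \<notin> X" and pendant: "{f \<in> F. v \<in> f} = {e}"
  shows "tree_splits X (W - {v}, F - {e}) \<subseteq> tree_splits X (W, F)"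
proof
  fix s
  assume "s \<in> tree_splits X (W - {v}, F - {e})"
  then obtain f u where s: "s = {X \<inter> component (F - {e} - {f}) u, X - component (F - {e} - {f}) u}"
    and f: "f \<in> F - {e}" and "u \<in> f"
    by (auto simp: tree_splits_def)
  have only_e: "g = e" if "g \<in> F" "v \<in> g" for g
    using pendant that by auto
  have "e \<in> F" "v \<in> e"
    using pendant by auto
  then obtain y where e: "e = {v, y}"
    using forest_edge_obtain[OF assms(1)] by metis
  have "u \<noteq> v"
    using f \<open>u \<in> f\<close> only_e by auto
  have "X \<inter> component (F - {e} - {f}) u = X \<inter> component (F - {f}) u"
  proof
    show "X \<inter> component (F - {e} - {f}) u \<subseteq> X \<inter> component (F - {f}) u"
      using component_mono[of "F - {e} - {f}" "F - {f}" u] by auto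
  next
    show "X \<inter> component (F - {f}) u \<subseteq> X \<inter> component (F - {e} - {f}) u"
    proof
      fix w
      assume w: "w \<in> X \<inter> component (F - {f}) u"
      have pendant_y: "\<forall>g\<in>F - {f}. v \<in> g \<longrightarrow> g = {v, y}"
        using only_e e by blast
      have "w \<noteq> v" "(u, w) \<in> (edge_rel (F - {f}))\<^sup>*"
        using w \<open>v \<notin> X\<close> by (auto simp: mem_component_iff)
      then have "(u, w) \<in> (edge_rel (F - {f} - {{v, y}}))\<^sup>*"
        using rtrancl_edge_rel_remove_pendant[OF pendant_y _ \<open>u \<noteq> v\<close>] by blast
      moreover have "F - {f} - {{v, y}} = F - {e} - {f}"
        using e by auto
      ultimately show "w \<in> X \<inter> component (F - {e} - {f}) u"
        using w by (simp add: mem_component_iff)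
    qed
  qed
  with s f \<open>u \<in> f\<close> show "s \<in> tree_splits X (W, F)"
    using tree_splits_memI[of f "(W, F)" u X] by simp
qed

lemma rtrancl_edge_rel_suppress_subset:
  assumes "{a, v} \<in> F" "{v, b} \<in> F" "f \<noteq> {a, v}" "f \<noteq> {v, b}"
    and "(x, y) \<in> (edge_rel ((F - {{a, v}, {v, b}}) \<union> {{a, b}} - {f}))\<^sup>*"
  shows "(x, y) \<in> (edge_rel (F - {f}))\<^sup>*"
proof -
  have "(a, v) \<in> edge_rel (F - {f})" "(v, b) \<in> edge_rel (F - {f})"
    using assms(1-4) by (auto simp: edge_rel_iff)
  then have ab: "(a, b) \<in> (edge_rel (F - {f}))\<^sup>*"
    by (rule rtrancl_trans[OF r_into_rtrancl r_into_rtrancl])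
  have "edge_rel ((F - {{a, v}, {v, b}}) \<union> {{a, b}} - {f}) \<subseteq> (edge_rel (F - {f}))\<^sup>*"
  proof (rule subrelI)
    fix p q
    assume "(p, q) \<in> edge_rel ((F - {{a, v}, {v, b}}) \<union> {{a, b}} - {f})"
    then consider "{p, q} = {a, b}" | "(p, q) \<in> edge_rel (F - {f})"
      by (auto simp: edge_rel_iff)
    then show "(p, q) \<in> (edge_rel (F - {f}))\<^sup>*"
    proof cases
      case 1
      then show ?thesis
        using ab rtrancl_edge_rel_sym[OF ab] by (auto simp: doubleton_eq_iff)
    qed auto
  qed
  then show ?thesis
    using assms(5) rtrancl_subset_rtrancl by blast
qed

lemma rtrancl_edge_rel_suppress:
  assumes incident: "{g \<in> F. v \<in> g} = {{a, v}, {v, b}}" and "a \<noteq> v" "b \<noteq> v" "f \<noteq> {a, b}"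
    and "(u, w) \<in> (edge_rel (F - {f}))\<^sup>*" "u \<noteq> v" "w \<noteq> v"
  shows "(u, w) \<in> (edge_rel ((F - {{a, v}, {v, b}}) \<union> {{a, b}} - {f}))\<^sup>*"
proof -
  let ?R = "edge_rel ((F - {{a, v}, {v, b}}) \<union> {{a, b}} - {f})"
  have only: "g = {a, v} \<or> g = {v, b}" if "g \<in> F" "v \<in> g" for g
    using incident that by auto
  have "(a, b) \<in> ?R" "(b, a) \<in> ?R"
    using \<open>f \<noteq> {a, b}\<close> by (auto simp: edge_rel_iff insert_commute)
  then have a_b: "(u', a) \<in> ?R\<^sup>* \<longleftrightarrow> (u', b) \<in> ?R\<^sup>*" for u'
    using rtrancl_into_rtrancl[of u' a ?R b] rtrancl_into_rtrancl[of u' b ?R a] by blast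
  have "(u, if w = v then a else w) \<in> ?R\<^sup>*"
    using \<open>(u, w) \<in> _\<close>
  proof (induction rule: rtrancl_induct)
    case base
    then show ?case
      using \<open>u \<noteq> v\<close> by simp
  next
    case (step w1 w2)
    have edge: "{w1, w2} \<in> F - {f}"
      using step.hyps(2) by (simp add: edge_rel_iff)
    consider "v \<in> {w1, w2}" | "v \<notin> {w1, w2}"
      by argo
    then show ?case
    proof cases
      case 1
      then have "{w1, w2} = {a, v} \<or> {w1, w2} = {v, b}"
        by (rule only[rotated]) (use edge in auto)
      then have ends: "w1 \<in> {a, b, v}" "w2 \<in> {a, b, v}"
        by (auto simp: doubleton_eq_iff)
      have "(u, a) \<in> ?R\<^sup>* \<or> (u, b) \<in> ?R\<^sup>*"
        using step.IH ends(1) \<open>a \<noteq> v\<close> \<open>b \<noteq> v\<close> by auto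
      then have "(u, a) \<in> ?R\<^sup>*" "(u, b) \<in> ?R\<^sup>*"
        using a_b by blast+
      then show ?thesis
        using ends(2) by auto
    next
      case 2
      then have "(u, w1) \<in> ?R\<^sup>*"
        using step.IH by (auto split: if_splits)
      moreover have "{w1, w2} \<in> (F - {{a, v}, {v, b}}) \<union> {{a, b}} - {f}"
        using edge 2 by auto
      ultimately have "(u, w2) \<in> ?R\<^sup>*"
        by (rule rtrancl_edge_rel_into_rtrancl)
      then show ?thesis
        using 2 by auto
    qed
  qed
  then show ?thesis
    using \<open>w \<noteq> v\<close> by simp
qed

lemma suppress_ends_disconnected:
  assumes "forest W F" and incident: "{g \<in> F. v \<in> g} = {{a, v}, {v, b}}" and "a \<noteq> b" "b \<noteq> v"
  shows "(a, b) \<notin> (edge_rel (F - {{a, v}, {v, b}}))\<^sup>*"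
proof
  assume "(a, b) \<in> (edge_rel (F - {{a, v}, {v, b}}))\<^sup>*"
  then have "(a, b) \<in> (edge_rel (F - {{a, v}}))\<^sup>*"
    by (rule rtrancl_edge_rel_mono) auto
  moreover have "{a, v} \<in> F" "{v, b} \<in> F"
    using incident by auto
  then have "{b, v} \<in> F - {{a, v}}"
    using \<open>a \<noteq> b\<close> \<open>b \<noteq> v\<close> by (auto simp: doubleton_eq_iff insert_commute)
  ultimately have "(a, v) \<in> (edge_rel (F - {{a, v}}))\<^sup>*"
    by (rule rtrancl_edge_rel_into_rtrancl)
  with forest_bridge[OF assms(1) \<open>{a, v} \<in> F\<close>] show False
    by blast
qed

lemma suppressed_edge_notin:
  assumes "forest W F" and incident: "{g \<in> F. v \<in> g} = {{a, v}, {v, b}}"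
    and "a \<noteq> b" "a \<noteq> v" "b \<noteq> v"
  shows "{a, b} \<notin> F"
proof
  assume "{a, b} \<in> F"
  then have "{a, b} \<in> F - {{a, v}, {v, b}}"
    using \<open>a \<noteq> v\<close> \<open>b \<noteq> v\<close> by (auto simp: doubleton_eq_iff)
  then have "(a, b) \<in> (edge_rel (F - {{a, v}, {v, b}}))\<^sup>*"
    by (simp add: edge_rel_iff r_into_rtrancl)
  with suppress_ends_disconnected[OF assms(1,2,3,5)] show False
    by blast
qed

lemma forest_suppress:
  assumes "forest W F" and incident: "{g \<in> F. v \<in> g} = {{a, v}, {v, b}}"
    and "a \<noteq> b" "a \<noteq> v" "b \<noteq> v"
  shows "forest (W - {v}) ((F - {{a, v}, {v, b}}) \<union> {{a, b}})"
  unfolding forest_def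
proof (intro conjI allI impI ballI)
  let ?F' = "(F - {{a, v}, {v, b}}) \<union> {{a, b}}"
  have "{a, v} \<in> F" "{v, b} \<in> F"
    using incident by auto
  have only: "g = {a, v} \<or> g = {v, b}" if "g \<in> F" "v \<in> g" for g
    using incident that by auto
  show "finite (W - {v})"
    using assms(1) by (simp add: forest_def)
  show "g \<subseteq> W - {v}" "card g = 2" if "g \<in> ?F'" for g
  proof -
    have "{a, v} \<subseteq> W" "{v, b} \<subseteq> W"
      using forest_edgeD[OF assms(1)] \<open>{a, v} \<in> F\<close> \<open>{v, b} \<in> F\<close> by auto
    moreover have "g \<subseteq> W \<and> card g = 2 \<and> v \<notin> g" if "g \<in> F" "g \<noteq> {a, v}" "g \<noteq> {v, b}"
      using forest_edgeD[OF assms(1)] only that by blast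
    ultimately show "g \<subseteq> W - {v}" "card g = 2"
      using \<open>g \<in> ?F'\<close> \<open>a \<noteq> b\<close> \<open>a \<noteq> v\<close> \<open>b \<noteq> v\<close> by auto
  qed
  fix x y
  assume xy: "{x, y} \<in> ?F'"
  show "(x, y) \<notin> (edge_rel (?F' - {{x, y}}))\<^sup>*"
  proof
    assume reach: "(x, y) \<in> (edge_rel (?F' - {{x, y}}))\<^sup>*"
    show False
    proof (cases "{x, y} = {a, b}")
      case True
      then have "?F' - {{x, y}} = F - {{a, v}, {v, b}}"
        using suppressed_edge_notin[OF assms] by auto
      with reach have "(x, y) \<in> (edge_rel (F - {{a, v}, {v, b}}))\<^sup>*"
        by simp
      moreover have "x = a \<and> y = b \<or> x = b \<and> y = a"
        using True by (auto simp: doubleton_eq_iff)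
      ultimately have "(a, b) \<in> (edge_rel (F - {{a, v}, {v, b}}))\<^sup>*"
        using rtrancl_edge_rel_sym[of b a] by auto
      with suppress_ends_disconnected[OF assms(1-3,5)] show False
        by blast
    next
      case False
      then have "{x, y} \<in> F" "{x, y} \<noteq> {a, v}" "{x, y} \<noteq> {v, b}"
        using xy \<open>a \<noteq> v\<close> \<open>b \<noteq> v\<close> by (auto simp: doubleton_eq_iff)
      with rtrancl_edge_rel_suppress_subset[OF \<open>{a, v} \<in> F\<close> \<open>{v, b} \<in> F\<close> _ _ reach]
        forest_bridge[OF assms(1)] show False
        by blast
    qed
  qed
qed

lemma component_suppressed_edge:
  assumes "forest W F" "v \<notin> X" and incident: "{g \<in> F. v \<in> g} = {{a, v}, {v, b}}"
    and "a \<noteq> b" "a \<noteq> v" "b \<noteq> v"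
  shows "X \<inter> component ((F - {{a, v}, {v, b}}) \<union> {{a, b}} - {{a, b}}) a =
    X \<inter> component (F - {{a, v}}) a"
proof
  have removed: "(F - {{a, v}, {v, b}}) \<union> {{a, b}} - {{a, b}} = F - {{a, v}} - {{v, b}}"
    using suppressed_edge_notin[OF assms(1,3-6)] by auto
  then show "X \<inter> component ((F - {{a, v}, {v, b}}) \<union> {{a, b}} - {{a, b}}) a \<subseteq>
      X \<inter> component (F - {{a, v}}) a"
    using component_mono[of "F - {{a, v}} - {{v, b}}" "F - {{a, v}}" a] by auto
  show "X \<inter> component (F - {{a, v}}) a \<subseteq>
      X \<inter> component ((F - {{a, v}, {v, b}}) \<union> {{a, b}} - {{a, b}}) a"
  proof
    fix w
    assume w: "w \<in> X \<inter> component (F - {{a, v}}) a"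
    have only: "g = {a, v} \<or> g = {v, b}" if "g \<in> F" "v \<in> g" for g
      using incident that by auto
    then have pendant: "\<forall>g\<in>F - {{a, v}}. v \<in> g \<longrightarrow> g = {v, b}"
      by blast
    have "w \<noteq> v" "(a, w) \<in> (edge_rel (F - {{a, v}}))\<^sup>*"
      using w \<open>v \<notin> X\<close> by (auto simp: mem_component_iff)
    then have "(a, w) \<in> (edge_rel (F - {{a, v}} - {{v, b}}))\<^sup>*"
      using rtrancl_edge_rel_remove_pendant[OF pendant _ \<open>a \<noteq> v\<close>] by blast
    with w removed show "w \<in> X \<inter> component ((F - {{a, v}, {v, b}}) \<union> {{a, b}} - {{a, b}}) a"
      by (simp add: mem_component_iff)
  qed
qed

lemma component_suppress_other_edge:
  assumes incident: "{g \<in> F. v \<in> g} = {{a, v}, {v, b}}" and "v \<notin> X" "a \<noteq> v" "b \<noteq> v"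
    and "f \<in> (F - {{a, v}, {v, b}}) \<union> {{a, b}}" "f \<noteq> {a, b}" "u \<in> f"
  shows "f \<in> F" "X \<inter> component ((F - {{a, v}, {v, b}}) \<union> {{a, b}} - {f}) u =
    X \<inter> component (F - {f}) u"
proof -
  have "{a, v} \<in> F" "{v, b} \<in> F"
    using incident by auto
  show "f \<in> F"
    using assms(5,6) by auto
  have "f \<noteq> {a, v}" "f \<noteq> {v, b}"
    using assms(5,6) by auto
  moreover have "g = {a, v} \<or> g = {v, b}" if "g \<in> F" "v \<in> g" for g
    using incident that by auto
  ultimately have "u \<noteq> v"
    using \<open>f \<in> F\<close> \<open>u \<in> f\<close> by blast
  show "X \<inter> component ((F - {{a, v}, {v, b}}) \<union> {{a, b}} - {f}) u = X \<inter> component (F - {f}) u"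
  proof
    show "X \<inter> component ((F - {{a, v}, {v, b}}) \<union> {{a, b}} - {f}) u \<subseteq> X \<inter> component (F - {f}) u"
      using rtrancl_edge_rel_suppress_subset[OF \<open>{a, v} \<in> F\<close> \<open>{v, b} \<in> F\<close> \<open>f \<noteq> {a, v}\<close>
          \<open>f \<noteq> {v, b}\<close>]
      by (auto simp: mem_component_iff)
    show "X \<inter> component (F - {f}) u \<subseteq> X \<inter> component ((F - {{a, v}, {v, b}}) \<union> {{a, b}} - {f}) u"
      using rtrancl_edge_rel_suppress[OF incident \<open>a \<noteq> v\<close> \<open>b \<noteq> v\<close> \<open>f \<noteq> {a, b}\<close> _ \<open>u \<noteq> v\<close>]
        \<open>v \<notin> X\<close>
      by (force simp: mem_component_iff)
  qed
qed

lemma tree_splits_suppress: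
  assumes "forest W F" "v \<notin> X" and incident: "{g \<in> F. v \<in> g} = {{a, v}, {v, b}}"
    and "a \<noteq> b" "a \<noteq> v" "b \<noteq> v"
  shows "tree_splits X (W - {v}, (F - {{a, v}, {v, b}}) \<union> {{a, b}}) \<subseteq> tree_splits X (W, F)"
proof
  let ?F' = "(F - {{a, v}, {v, b}}) \<union> {{a, b}}"
  fix s
  assume "s \<in> tree_splits X (W - {v}, ?F')"
  then obtain f u where s: "s = {X \<inter> component (?F' - {f}) u, X - component (?F' - {f}) u}"
    and "f \<in> ?F'" "u \<in> f"
    by (auto simp: tree_splits_def)
  obtain f0 where "f0 \<in> F" "u \<in> f0"
    and "X \<inter> component (?F' - {f}) u = X \<inter> component (F - {f0}) u"
  proof (cases "f = {a, b}")
    case True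
    then consider "u = a" | "u = b"
      using \<open>u \<in> f\<close> by auto
    then show ?thesis
    proof cases
      case 1
      then show ?thesis
        using that[of "{a, v}"] component_suppressed_edge[OF assms] incident True by auto
    next
      case 2
      have "{g \<in> F. v \<in> g} = {{b, v}, {v, a}}" "?F' = (F - {{b, v}, {v, a}}) \<union> {{b, a}}"
        using incident by (auto simp: insert_commute)
      with component_suppressed_edge[of W F v X b a] assms have
        "X \<inter> component (?F' - {{a, b}}) b = X \<inter> component (F - {{b, v}}) b"
        by (simp add: insert_commute)
      then show ?thesis
        using that[of "{b, v}"] incident True 2 by (auto simp: insert_commute)
    qed
  next
    case False
    then show ?thesis
      using component_suppress_other_edge[OF incident assms(2,5,6) \<open>f \<in> ?F'\<close> False \<open>u \<in> f\<close>]
        that \<open>u \<in> f\<close>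
      by blast
  qed
  then show "s \<in> tree_splits X (W, F)"
    using s tree_splits_memI[of f0 "(W, F)" u X] by simp
qed

lemma reduce_step_forest:
  assumes "reduce_step X G G'" "forest (fst G) (snd G)"
  shows "forest (fst G') (snd G') \<and> tree_splits X G' \<subseteq> tree_splits X G"
proof -
  obtain W F where G: "G = (W, F)"
    by (cases G)
  with assms(2) have "forest W F"
    by simp
  from assms(1) consider (prune) "prune_step X G G'" | (suppress) "suppress_step X G G'"
    by (auto simp: reduce_step_def)
  then show ?thesis
  proof cases
    case prune
    then obtain v e where v: "v \<notin> X" and pendant: "{f \<in> F. v \<in> f} = {e}"
      and G': "G' = (W - {v}, F - {e})"
      by (auto simp: prune_step_def G)
    have "forest (W - {v}) (F - {e})"
    proof (rule forest_subgraph[OF \<open>forest W F\<close>])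
      show "finite (W - {v})"
        using \<open>forest W F\<close> by (simp add: forest_def)
      show "\<forall>g\<in>F - {e}. g \<subseteq> W - {v}"
        using pendant forest_edgeD[OF \<open>forest W F\<close>] by blast
    qed auto
    with tree_splits_prune[OF \<open>forest W F\<close> v pendant] show ?thesis
      by (simp add: G G')
  next
    case suppress
    then obtain v a b where "v \<notin> X" "a \<noteq> b" "a \<noteq> v" "b \<noteq> v"
      and incident: "{f \<in> F. v \<in> f} = {{a, v}, {v, b}}"
      and G': "G' = (W - {v}, (F - {{a, v}, {v, b}}) \<union> {{a, b}})"
      by (auto simp: suppress_step_def G)
    with forest_suppress[OF \<open>forest W F\<close> incident] tree_splits_suppress[OF \<open>forest W F\<close> _ incident]
    show ?thesis
      by (simp add: G)
  qed
qed

lemma reduce_steps_forest: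
  assumes "(reduce_step X)\<^sup>*\<^sup>* G G'" "forest (fst G) (snd G)"
  shows "forest (fst G') (snd G') \<and> tree_splits X G' \<subseteq> tree_splits X G"
  using assms(1)
proof (induction rule: rtranclp_induct)
  case base
  then show ?case
    using assms(2) by simp
next
  case (step G1 G2)
  then show ?case
    using reduce_step_forest[of X G1 G2] by blast
qed

lemma finite_component:
  assumes "forest W F" "F' \<subseteq> F"
  shows "finite (component F' x)"
proof -
  have "\<forall>g\<in>F'. g \<subseteq> W"
    using assms forest_edgeD by blast
  then have "component F' x \<subseteq> insert x W"
    by (rule component_subset_insert)
  moreover have "finite W"
    using assms(1) by (simp add: forest_def)
  ultimately show ?thesis
    using finite_subset by blast
qed

lemma component_psubset_across_edge:
  assumes "forest W F" "{x, z} \<in> F" "{x, z} \<noteq> f" "x \<in> f"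
  shows "component (F - {{x, z}}) z \<subset> component (F - {f}) x"
proof -
  have "(x, z) \<notin> (edge_rel (F - {{x, z}}))\<^sup>*"
    using forest_bridge[OF assms(1,2)] .
  then have bridge: "(z, x) \<notin> (edge_rel (F - {{x, z}}))\<^sup>*"
    by (metis rtrancl_edge_rel_sym)
  have "(x, z) \<in> edge_rel (F - {f})"
    using assms(2,3) by (simp add: edge_rel_iff)
  have "component (F - {{x, z}}) z \<subseteq> component (F - {f}) x"
  proof
    fix w
    assume "w \<in> component (F - {{x, z}}) z"
    then have "(z, w) \<in> (edge_rel (F - {{x, z}} - {f}))\<^sup>*"
      using rtrancl_edge_rel_remove_unreachable[OF _ bridge \<open>x \<in> f\<close>]
      by (simp add: mem_component_iff)
    then have "(z, w) \<in> (edge_rel (F - {f}))\<^sup>*"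
      by (rule rtrancl_edge_rel_mono) auto
    with \<open>(x, z) \<in> edge_rel (F - {f})\<close> show "w \<in> component (F - {f}) x"
      by (simp add: mem_component_iff converse_rtrancl_into_rtrancl)
  qed
  moreover have "x \<in> component (F - {f}) x" "x \<notin> component (F - {{x, z}}) z"
    using bridge by (simp_all add: mem_component_iff)
  ultimately show ?thesis
    by blast
qed

lemma irreducible_forest_other_edge:
  assumes "forest W F" and irreducible: "\<not> (\<exists>G'. reduce_step X (W, F) G')"
    and "f \<in> F" "x \<in> f" "x \<notin> X"
  obtains z where "{x, z} \<in> F" "{x, z} \<noteq> f"
proof -
  have "x \<in> W"
    using assms(3,4) forest_edgeD[OF assms(1)] by blast
  have "\<not> prune_step X (W, F) (W - {x}, F - {f})"
    using irreducible by (auto simp: reduce_step_def)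
  then have "{g \<in> F. x \<in> g} \<noteq> {f}"
    using \<open>x \<in> W\<close> \<open>x \<notin> X\<close> by (auto simp: prune_step_def)
  moreover have "f \<in> {g \<in> F. x \<in> g}"
    using assms(3,4) by simp
  ultimately have "{g \<in> F. x \<in> g} - {f} \<noteq> {}"
    unfolding Diff_eq_empty_iff by (metis empty_iff subset_singletonD)
  then obtain g where "g \<in> F" "x \<in> g" "g \<noteq> f"
    by blast
  with forest_edge_obtain[OF assms(1)] that show thesis
    by metis
qed

lemma irreducible_forest_side_meets_leaves:
  assumes "forest W F" and irreducible: "\<not> (\<exists>G'. reduce_step X (W, F) G')"
    and "f \<in> F" "x \<in> f"
  shows "X \<inter> component (F - {f}) x \<noteq> {}"
  using assms(3,4)
proof (induction "card (component (F - {f}) x)" arbitrary: f x rule: less_induct)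
  case less
  show ?case
  proof (cases "x \<in> X")
    case True
    then show ?thesis
      by (auto simp: mem_component_iff)
  next
    case False
    then obtain z where z: "{x, z} \<in> F" "{x, z} \<noteq> f"
      using irreducible_forest_other_edge[OF assms(1,2) less.prems] by blast
    note smaller = component_psubset_across_edge[OF assms(1) z less.prems(2)]
    then have "card (component (F - {{x, z}}) z) < card (component (F - {f}) x)"
      by (rule psubset_card_mono[OF finite_component[OF assms(1)], rotated]) auto
    from less.hyps[OF this \<open>{x, z} \<in> F\<close>] smaller show ?thesis
      by auto
  qed
qed

lemma irreducible_forest_split_nontrivial:
  assumes "forest W F" "\<not> (\<exists>G'. reduce_step X (W, F) G')" "f \<in> F" "x \<in> f"
  shows "X \<inter> component (F - {f}) x \<noteq> {}" "X - component (F - {f}) x \<noteq> {}"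
proof -
  show "X \<inter> component (F - {f}) x \<noteq> {}"
    by (rule irreducible_forest_side_meets_leaves[OF assms])
  obtain y where fy: "f = {x, y}"
    using forest_edge_obtain[OF assms(1,3,4)] by metis
  have "X \<inter> component (F - {f}) y \<noteq> {}"
    using irreducible_forest_side_meets_leaves[OF assms(1-3)] fy by simp
  moreover have "(x, y) \<notin> (edge_rel (F - {f}))\<^sup>*"
    using forest_bridge[OF assms(1)] assms(3) fy by simp
  then have "component (F - {f}) y \<inter> component (F - {f}) x = {}"
    unfolding mem_component_iff component_def using rtrancl_edge_rel_join[of x _ "F - {f}" y] by blast
  ultimately show "X - component (F - {f}) x \<noteq> {}"
    by blast
qed

section \<open>Spanning trees of a network\<close>

lemma rooted_networkD:
  assumes "rooted_network V A r X"
  shows "finite V" "A \<subseteq> V \<times> V" "acyclic A" "indeg A r = 0"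
    "X = {v \<in> V. indeg A v = 1 \<and> outdeg A v = 0}"
    "\<And>v. v \<in> V - {r} \<Longrightarrow> (indeg A v, outdeg A v) \<in> {(1, 0), (1, 2), (2, 1)}"
  using assms unfolding rooted_network_def acyclic_def by auto

lemma finite_parents:
  assumes "rooted_network V A r X"
  shows "finite {u. (u, y) \<in> A}"
proof -
  have "{u. (u, y) \<in> A} \<subseteq> V"
    using rooted_networkD(2)[OF assms] by auto
  then show ?thesis
    using rooted_networkD(1)[OF assms] finite_subset by blast
qed

lemma deletion_choice_hybridE:
  assumes "deletion_choice A D" "indeg A y = 2"
  obtains d where "{u. (u, y) \<in> D} = {d}" "(d, y) \<in> A"
proof -
  have "card {u. (u, y) \<in> D} = 1"
    using assms by (auto simp: deletion_choice_def)
  then obtain d where d: "{u. (u, y) \<in> D} = {d}"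
    using card_1_singletonE by blast
  moreover have "(d, y) \<in> A"
    using d assms(1) by (auto simp: deletion_choice_def hybrid_edges_def)
  ultimately show thesis
    using that by blast
qed

lemma deletion_choice_unique_parent:
  assumes rn: "rooted_network V A r X" and dc: "deletion_choice A D"
    and "(x1, y) \<in> A - D" "(x2, y) \<in> A - D"
  shows "x1 = x2"
proof (rule ccontr)
  assume "x1 \<noteq> x2"
  define P where "P = {u. (u, y) \<in> A}"
  have "finite P"
    using finite_parents[OF rn] by (simp add: P_def)
  have sub: "{x1, x2} \<subseteq> P"
    using assms(3,4) by (auto simp: P_def)
  then have "2 \<le> indeg A y"
    using card_mono[OF \<open>finite P\<close> sub] \<open>x1 \<noteq> x2\<close> by (simp add: indeg_def P_def)
  moreover have "y \<in> V" "y \<noteq> r"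
    using assms(3) rooted_networkD(2,4)[OF rn] \<open>2 \<le> indeg A y\<close> by auto
  ultimately have "indeg A y = 2"
    using rooted_networkD(6)[OF rn, of y] by auto
  then have "P = {x1, x2}"
    using card_subset_eq[OF \<open>finite P\<close> sub] \<open>x1 \<noteq> x2\<close> by (simp add: indeg_def P_def)
  moreover obtain d where "{u. (u, y) \<in> D} = {d}" "(d, y) \<in> A"
    using deletion_choice_hybridE[OF dc \<open>indeg A y = 2\<close>] .
  ultimately show False
    using assms(3,4) by (auto simp: P_def)
qed

lemma deletion_choice_parent_exists:
  assumes rn: "rooted_network V A r X" and dc: "deletion_choice A D"
    and "y \<in> V" "y \<noteq> r"
  obtains p where "(p, y) \<in> A - D"
proof -
  define P where "P = {u. (u, y) \<in> A}"
  have "indeg A y = 1 \<or> indeg A y = 2"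
    using rooted_networkD(6)[OF rn, of y] assms(3,4) by auto
  then have "\<exists>p. (p, y) \<in> A - D"
  proof
    assume "indeg A y = 1"
    then obtain p where "P = {p}"
      using card_1_singletonE by (auto simp: indeg_def P_def)
    moreover have "(p, y) \<notin> D"
      using dc \<open>indeg A y = 1\<close> by (auto simp: deletion_choice_def hybrid_edges_def)
    ultimately show ?thesis
      by (auto simp: P_def)
  next
    assume "indeg A y = 2"
    then have "card P = 2"
      by (simp add: indeg_def P_def)
    obtain d where d: "{u. (u, y) \<in> D} = {d}"
      using deletion_choice_hybridE[OF dc \<open>indeg A y = 2\<close>] by blast
    have "P \<noteq> {d}" "P \<noteq> {}"
      using \<open>card P = 2\<close> by auto
    then obtain p where "p \<in> P" "p \<noteq> d"
      by blast
    then show ?thesis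
      using d by (auto simp: P_def)
  qed
  then show thesis
    using that by blast
qed

lemma deletion_choice_reachable_from_root:
  assumes rn: "rooted_network V A r X" and dc: "deletion_choice A D" and "y \<in> V"
  shows "(r, y) \<in> (A - D)\<^sup>*"
proof -
  have "finite A"
    using rooted_networkD(1,2)[OF rn] finite_subset by blast
  then have "wf A"
    using rooted_networkD(3)[OF rn] finite_acyclic_wf by blast
  then show ?thesis
    using \<open>y \<in> V\<close>
  proof (induction y rule: wf_induct_rule)
    case (less y)
    show ?case
    proof (cases "y = r")
      case False
      then obtain p where p: "(p, y) \<in> A - D"
        using deletion_choice_parent_exists[OF rn dc less.prems] by blast
      then have "p \<in> V"
        using rooted_networkD(2)[OF rn] by auto
      with less.IH p have "(r, p) \<in> (A - D)\<^sup>*"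
        by blast
      then show ?thesis
        using p by (rule rtrancl_into_rtrancl)
    qed simp
  qed
qed

lemma deletion_choice_connected:
  assumes "rooted_network V A r X" "deletion_choice A D" "u \<in> V" "w \<in> V"
  shows "(u, w) \<in> (edge_rel (und_edges (A - D)))\<^sup>*"
proof -
  have "A - D \<subseteq> edge_rel (und_edges (A - D))"
    by (auto simp: edge_rel_def und_edges_def)
  then have "(r, u) \<in> (edge_rel (und_edges (A - D)))\<^sup>*" "(r, w) \<in> (edge_rel (und_edges (A - D)))\<^sup>*"
    using deletion_choice_reachable_from_root[OF assms(1,2)] assms(3,4) rtrancl_mono by blast+
  then show ?thesis
    by (rule rtrancl_trans[OF rtrancl_edge_rel_sym])
qed

lemma deletion_choice_descendants_closed:
  assumes rn: "rooted_network V A r X" and dc: "deletion_choice A D" and "(p, c) \<in> A - D"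
    and "(c, w) \<in> (edge_rel (und_edges (A - D) - {{p, c}}))\<^sup>*"
  shows "(c, w) \<in> (A - D)\<^sup>*"
  using assms(4)
proof (induction rule: rtrancl_induct)
  case base
  then show ?case
    by simp
next
  case (step w1 w2)
  have "{w1, w2} \<in> und_edges (A - D)" "{w1, w2} \<noteq> {p, c}"
    using step.hyps(2) by (auto simp: edge_rel_iff)
  then obtain x y where e: "{w1, w2} = {x, y}" and xy: "(x, y) \<in> A - D"
    unfolding und_edges_def by blast
  from e consider "w1 = x" "w2 = y" | "w1 = y" "w2 = x"
    by (auto simp: doubleton_eq_iff)
  then show ?case
  proof cases
    case 1
    then show ?thesis
      using rtrancl_into_rtrancl[of c x "A - D" y] step.IH xy by simp
  next
    case 2
    have "y \<noteq> c"
    proof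
      assume "y = c"
      then have "x = p"
        using deletion_choice_unique_parent[OF rn dc xy] assms(3) by simp
      with \<open>y = c\<close> 2 \<open>{w1, w2} \<noteq> {p, c}\<close> show False
        by (simp add: insert_commute)
    qed
    then obtain z where "(c, z) \<in> (A - D)\<^sup>*" "(z, y) \<in> A - D"
      using step.IH 2 by (metis rtranclE)
    moreover from this(2) have "z = x"
      using deletion_choice_unique_parent[OF rn dc _ xy] by simp
    ultimately show ?thesis
      using 2 by simp
  qed
qed

lemma forest_deletion_choice:
  assumes rn: "rooted_network V A r X" and dc: "deletion_choice A D"
  shows "forest V (und_edges (A - D))"
  unfolding forest_def
proof (intro conjI allI impI ballI)
  show "finite V"
    using rooted_networkD(1)[OF rn] .
next
  fix g
  assume "g \<in> und_edges (A - D)"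
  then obtain p c where g: "g = {p, c}" "(p, c) \<in> A - D"
    by (auto simp: und_edges_def)
  then have "p \<noteq> c"
    using rooted_networkD(3)[OF rn] by (auto simp: acyclic_def)
  then show "g \<subseteq> V" "card g = 2"
    using g rooted_networkD(2)[OF rn] by auto
next
  fix x y
  assume "{x, y} \<in> und_edges (A - D)"
  then obtain p c where xy: "{x, y} = {p, c}" and pc: "(p, c) \<in> A - D"
    by (auto simp: und_edges_def)
  have cp: "(c, p) \<notin> (edge_rel (und_edges (A - D) - {{p, c}}))\<^sup>*"
  proof
    assume "(c, p) \<in> (edge_rel (und_edges (A - D) - {{p, c}}))\<^sup>*"
    then have "(c, p) \<in> A\<^sup>*"
      using deletion_choice_descendants_closed[OF rn dc pc] rtrancl_mono[of "A - D" A] by blast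
    then have "(p, p) \<in> A\<^sup>+"
      using pc by (auto intro: rtrancl_into_trancl2)
    with rooted_networkD(3)[OF rn] show False
      by (simp add: acyclic_def)
  qed
  then have "(p, c) \<notin> (edge_rel (und_edges (A - D) - {{p, c}}))\<^sup>*"
    by (metis rtrancl_edge_rel_sym)
  with cp xy show "(x, y) \<notin> (edge_rel (und_edges (A - D) - {{x, y}}))\<^sup>*"
    by (auto simp: doubleton_eq_iff insert_commute)
qed

lemma displayed_splitE:
  assumes rn: "rooted_network V A r X" and "s \<in> displayed_splits V A X"
  obtains D u u' where "deletion_choice A D" "{u, u'} \<in> und_edges (A - D)"
    and "s = {X \<inter> component (und_edges (A - D) - {{u, u'}}) u,
              X - component (und_edges (A - D) - {{u, u'}}) u}"
    and "X \<inter> component (und_edges (A - D) - {{u, u'}}) u \<noteq> {}"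
    and "X - component (und_edges (A - D) - {{u, u'}}) u \<noteq> {}"
proof -
  obtain T where "s \<in> tree_splits X T" and "displayed_tree V A X T"
    using assms(2) by (auto simp: displayed_splits_def)
  then obtain D where dc: "deletion_choice A D"
    and reduce: "(reduce_step X)\<^sup>*\<^sup>* (V, und_edges (A - D)) T"
    and irreducible: "\<not> (\<exists>T'. reduce_step X T T')"
    by (auto simp: displayed_tree_def)
  define F0 where "F0 = und_edges (A - D)"
  have "forest V F0"
    unfolding F0_def by (rule forest_deletion_choice[OF rn dc])
  obtain W F where T: "T = (W, F)"
    by (cases T)
  have "forest W F" and sub: "tree_splits X T \<subseteq> tree_splits X (V, F0)"
    using reduce_steps_forest[OF reduce] \<open>forest V F0\<close> by (simp_all add: F0_def T)
  from \<open>s \<in> tree_splits X T\<close> obtain f x where f: "f \<in> F" "x \<in> f"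
    and s_T: "s = {X \<inter> component (F - {f}) x, X - component (F - {f}) x}"
    by (auto simp: tree_splits_def T)
  have "X \<inter> component (F - {f}) x \<noteq> {}" "X - component (F - {f}) x \<noteq> {}"
    using irreducible_forest_split_nontrivial[OF \<open>forest W F\<close> _ f] irreducible by (simp_all add: T)
  moreover from \<open>s \<in> tree_splits X T\<close> sub have "s \<in> tree_splits X (V, F0)"
    by blast
  then obtain e u where e: "e \<in> F0" "u \<in> e"
    and s_F0: "s = {X \<inter> component (F0 - {e}) u, X - component (F0 - {e}) u}"
    by (auto simp: tree_splits_def)
  moreover obtain u' where "e = {u, u'}"
    using forest_edge_obtain[OF \<open>forest V F0\<close> e] by metis
  ultimately show thesis
    using that[OF dc, of u u'] s_T e by (auto simp: F0_def doubleton_eq_iff)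
qed

section \<open>Circular splits\<close>

lemma noninterlaced_interval:
  fixes P :: "nat \<Rightarrow> bool"
  assumes noninterlaced: "\<And>k1 k2 k3 k4. k1 < k2 \<Longrightarrow> k2 < k3 \<Longrightarrow> k3 < k4 \<Longrightarrow> k4 < n \<Longrightarrow>
      P k1 = P k3 \<Longrightarrow> P k2 = P k4 \<Longrightarrow> P k1 = P k2"
    and "\<exists>k<n. P k \<noteq> P 0"
  shows "0 < Min {k. k < n \<and> P k \<noteq> P 0}" "Max {k. k < n \<and> P k \<noteq> P 0} < n"
    "{k. k < n \<and> P k \<noteq> P 0} = {Min {k. k < n \<and> P k \<noteq> P 0} .. Max {k. k < n \<and> P k \<noteq> P 0}}"
proof -
  define J where "J = {k. k < n \<and> P k \<noteq> P 0}"
  have "finite J" "J \<noteq> {}"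
    using assms(2) by (auto simp: J_def)
  then have "Min J \<in> J" "Max J \<in> J"
    by simp_all
  then show "0 < Min {k. k < n \<and> P k \<noteq> P 0}" "Max {k. k < n \<and> P k \<noteq> P 0} < n"
    by (auto simp: J_def intro: Nat.gr0I)
  have "J = {Min J..Max J}"
  proof
    show "J \<subseteq> {Min J..Max J}"
      using \<open>finite J\<close> by auto
    show "{Min J..Max J} \<subseteq> J"
    proof
      fix k
      assume k: "k \<in> {Min J..Max J}"
      show "k \<in> J"
      proof (rule ccontr)
        assume "k \<notin> J"
        with k \<open>Max J \<in> J\<close> have "P k = P 0"
          by (auto simp: J_def)
        with k \<open>Min J \<in> J\<close> \<open>Max J \<in> J\<close> have "0 < Min J" "Min J < k" "k < Max J" "Max J < n"
          by (auto simp: J_def le_less intro: Nat.gr0I)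
        from noninterlaced[OF this] \<open>P k = P 0\<close> \<open>Min J \<in> J\<close> \<open>Max J \<in> J\<close> show False
          by (auto simp: J_def)
      qed
    qed
  qed
  then show "{k. k < n \<and> P k \<noteq> P 0} = {Min {k. k < n \<and> P k \<noteq> P 0} .. Max {k. k < n \<and> P k \<noteq> P 0}}"
    by (simp add: J_def)
qed

lemma circ_part_interval:
  assumes "0 < j" "j \<le> m" "m < length xs"
  shows "circ_part xs (j - 1) m = (\<lambda>k. xs ! k) ` {j..m}"
proof -
  have "j - 1 < m"
    using assms(1,2) by arith
  then have "circ_part xs (j - 1) m = {xs ! (k mod length xs) | k. j - 1 < k \<and> k \<le> m}"
    by (simp add: circ_part_def)
  also have "\<dots> = {xs ! k | k. j \<le> k \<and> k \<le> m}"
  proof -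
    have "j - 1 < k \<and> k \<le> m \<longleftrightarrow> j \<le> k \<and> k \<le> m" for k
      using assms(1) by auto
    moreover have "k mod length xs = k" if "k \<le> m" for k
      using that assms(3) by simp
    ultimately show ?thesis
      by (metis (no_types, lifting))
  qed
  also have "\<dots> = (\<lambda>k. xs ! k) ` {j..m}"
    by auto
  finally show ?thesis .
qed

lemma circ_split_if_noninterlaced:
  fixes xs :: "'a list" and S :: "'a set"
  assumes "\<exists>k<length xs. xs ! k \<in> S" "\<exists>k<length xs. xs ! k \<notin> S"
    and noninterlaced: "\<And>k1 k2 k3 k4. k1 < k2 \<Longrightarrow> k2 < k3 \<Longrightarrow> k3 < k4 \<Longrightarrow> k4 < length xs \<Longrightarrow>
       (xs ! k1 \<in> S \<longleftrightarrow> xs ! k3 \<in> S) \<Longrightarrow> (xs ! k2 \<in> S \<longleftrightarrow> xs ! k4 \<in> S) \<Longrightarrow>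
       (xs ! k1 \<in> S \<longleftrightarrow> xs ! k2 \<in> S)"
  shows "\<exists>i j. i < length xs \<and> j < length xs \<and> i \<noteq> j \<and> {set xs \<inter> S, set xs - S} = circ_split xs i j"
proof -
  define P where "P k \<longleftrightarrow> xs ! k \<in> S" for k
  define J where "J = {k. k < length xs \<and> P k \<noteq> P 0}"
  have P_noninterlaced: "P k1 = P k2"
    if "k1 < k2" "k2 < k3" "k3 < k4" "k4 < length xs" "P k1 = P k3" "P k2 = P k4" for k1 k2 k3 k4
    using noninterlaced that unfolding P_def by blast
  have ex: "\<exists>k<length xs. P k \<noteq> P 0"
    using assms(1,2) unfolding P_def by blast
  have J: "0 < Min J" "Max J < length xs" "J = {Min J..Max J}"
    unfolding J_def by (rule noninterlaced_interval; fact P_noninterlaced ex)+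
  have "J \<noteq> {}"
    using ex by (simp add: J_def)
  then have "Min J \<le> Max J"
    using J(3) atLeastatMost_empty_iff by metis
  have part: "circ_part xs (Min J - 1) (Max J) = (\<lambda>k. xs ! k) ` J"
    using circ_part_interval[OF J(1) \<open>Min J \<le> Max J\<close> J(2)] J(3) by simp
  have "set xs = (\<lambda>k. xs ! k) ` {k. k < length xs}"
    by (auto simp: in_set_conv_nth)
  then have sides: "set xs - S = (\<lambda>k. xs ! k) ` {k. k < length xs \<and> xs ! k \<notin> S}"
    "set xs \<inter> S = (\<lambda>k. xs ! k) ` {k. k < length xs \<and> xs ! k \<in> S}"
    by auto
  have "{set xs \<inter> S, set xs - S} =
      {circ_part xs (Min J - 1) (Max J), set xs - circ_part xs (Min J - 1) (Max J)}"
  proof (cases "P 0")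
    case True
    then have "set xs - S = (\<lambda>k. xs ! k) ` J"
      unfolding sides J_def P_def by simp
    then have "set xs - S = circ_part xs (Min J - 1) (Max J)"
      using part by simp
    then show ?thesis
      by (auto simp: insert_commute)
  next
    case False
    then have "set xs \<inter> S = (\<lambda>k. xs ! k) ` J"
      unfolding sides J_def P_def by simp
    then have "set xs \<inter> S = circ_part xs (Min J - 1) (Max J)"
      using part by simp
    then show ?thesis
      by auto
  qed
  then show ?thesis
    using J(1,2) \<open>Min J \<le> Max J\<close>
    by (intro exI[of _ "Min J - 1"] exI[of _ "Max J"]) (auto simp: circ_split_def)
qed

section \<open>Outer-labelled planar drawings\<close>

locale outer_drawing =
  fixes V :: "'v set" and E :: "'v set set" and xs :: "'v list"
    and pos :: "'v \<Rightarrow> complex" and \<gamma> :: "'v set \<Rightarrow> real \<Rightarrow> complex"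
    and \<delta> :: "nat \<Rightarrow> real \<Rightarrow> complex" and R :: real and \<theta> :: "nat \<Rightarrow> real"
  assumes inj_pos: "inj_on pos V"
    and edge_arc: "e \<in> E \<Longrightarrow> arc (\<gamma> e)"
    and edge_ends: "e \<in> E \<Longrightarrow> {pathstart (\<gamma> e), pathfinish (\<gamma> e)} = pos ` e"
    and edge_avoids_vertices: "e \<in> E \<Longrightarrow> v \<in> V \<Longrightarrow> pos v \<in> path_image (\<gamma> e) \<Longrightarrow> v \<in> e"
    and edges_meet_at_ends: "e \<in> E \<Longrightarrow> e' \<in> E \<Longrightarrow> e \<noteq> e' \<Longrightarrow>
      path_image (\<gamma> e) \<inter> path_image (\<gamma> e') \<subseteq> pos ` (e \<inter> e')"
    and drawing_in_ball: "pos ` V \<union> (\<Union>e\<in>E. path_image (\<gamma> e)) \<subseteq> ball 0 R"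
    and leaf_arc: "k < length xs \<Longrightarrow> arc (\<delta> k)"
    and leaf_arc_start: "k < length xs \<Longrightarrow> pathstart (\<delta> k) = pos (xs ! k)"
    and leaf_arc_finish: "k < length xs \<Longrightarrow> pathfinish (\<delta> k) = of_real R * cis (\<theta> k)"
    and leaf_arc_meets_drawing: "k < length xs \<Longrightarrow>
      path_image (\<delta> k) \<inter> (pos ` V \<union> (\<Union>e\<in>E. path_image (\<gamma> e))) = {pos (xs ! k)}"
    and leaf_arc_inside: "k < length xs \<Longrightarrow> path_image (\<delta> k) - {pathfinish (\<delta> k)} \<subseteq> ball 0 R"
    and leaf_angle_nonneg: "k < length xs \<Longrightarrow> 0 \<le> \<theta> k"
    and leaf_angle_less: "k < length xs \<Longrightarrow> \<theta> k < 2 * pi"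
    and leaf_arcs_disjoint: "k < l \<Longrightarrow> l < length xs \<Longrightarrow> path_image (\<delta> k) \<inter> path_image (\<delta> l) = {}"
    and leaf_angle_mono: "k < l \<Longrightarrow> l < length xs \<Longrightarrow> \<theta> k < \<theta> l"

lemma induces_circular_orderE:
  assumes "induces_circular_order V E xs"
  obtains pos \<gamma> \<delta> R \<theta> where "outer_drawing V E xs pos \<gamma> \<delta> R \<theta>"
  using assms unfolding induces_circular_order_def
  apply (elim exE conjE)
  subgoal for pos \<gamma> \<delta> R \<theta>
    by (rule that[of pos \<gamma> \<delta> R \<theta>], unfold_locales) auto
  done

context outer_drawing
begin

abbreviation drawing :: "complex set" where
  "drawing \<equiv> pos ` V \<union> (\<Union>e\<in>E. path_image (\<gamma> e))"

definition component_drawing :: "'v set set \<Rightarrow> 'v \<Rightarrow> complex set" where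
  "component_drawing H u = insert (pos u) (\<Union>{path_image (\<gamma> g) | g. g \<in> H \<and> g \<subseteq> component H u})"

lemma component_drawing_subset:
  assumes "H \<subseteq> E" "u \<in> V"
  shows "component_drawing H u \<subseteq> drawing"
  using assms by (auto simp: component_drawing_def)

lemma path_in_component_drawing:
  assumes "H \<subseteq> E" "(u, w) \<in> (edge_rel H)\<^sup>*"
  obtains p where "path p" "pathstart p = pos u" "pathfinish p = pos w"
    "path_image p \<subseteq> component_drawing H u"
proof -
  have "\<exists>p. path p \<and> pathstart p = pos u \<and> pathfinish p = pos w \<and>
      path_image p \<subseteq> component_drawing H u"
    using assms(2)
  proof (induction rule: rtrancl_induct)
    case base
    show ?case
      by (rule exI[of _ "\<lambda>t. pos u"])
         (simp add: component_drawing_def path_def pathstart_def pathfinish_def path_image_def)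
  next
    case (step w1 w2)
    then obtain p where p: "path p" "pathstart p = pos u" "pathfinish p = pos w1"
      "path_image p \<subseteq> component_drawing H u"
      by blast
    define g where "g = {w1, w2}"
    have "g \<in> H"
      using step.hyps(2) by (simp add: edge_rel_iff g_def)
    moreover have "g \<subseteq> component H u"
      using step.hyps rtrancl_into_rtrancl[OF step.hyps] by (auto simp: g_def mem_component_iff)
    ultimately have image: "path_image (\<gamma> g) \<subseteq> component_drawing H u"
      by (auto simp: component_drawing_def)
    have "path (\<gamma> g)" and ends: "{pathstart (\<gamma> g), pathfinish (\<gamma> g)} = {pos w1, pos w2}"
      using edge_arc edge_ends \<open>g \<in> H\<close> assms(1) arc_imp_path by (auto simp: g_def)
    obtain q where "path q" "pathstart q = pos w1" "pathfinish q = pos w2"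
      "path_image q = path_image (\<gamma> g)"
    proof (cases "pathstart (\<gamma> g) = pos w1")
      case True
      then show ?thesis
        using that[of "\<gamma> g"] \<open>path (\<gamma> g)\<close> ends by (auto simp: doubleton_eq_iff)
    next
      case False
      then show ?thesis
        using that[of "reversepath (\<gamma> g)"] \<open>path (\<gamma> g)\<close> ends by (auto simp: doubleton_eq_iff)
    qed
    with p image show ?case
      by (intro exI[of _ "p +++ q"]) (auto simp: path_image_join)
  qed
  with that show thesis
    by blast
qed

lemma edge_drawings_meet:
  assumes "g1 \<in> E" "g2 \<in> E" "path_image (\<gamma> g1) \<inter> path_image (\<gamma> g2) \<noteq> {}"
  shows "g1 \<inter> g2 \<noteq> {}"
proof (cases "g1 = g2")
  case True
  have "pos ` g1 \<noteq> {}"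
    using edge_ends[OF assms(1)] by blast
  with True show ?thesis
    by blast
next
  case False
  then show ?thesis
    using edges_meet_at_ends[OF assms(1,2)] assms(3) by blast
qed

lemma component_drawings_disjoint:
  assumes "H \<subseteq> E" "a \<in> V" "b \<in> V" "(a, b) \<notin> (edge_rel H)\<^sup>*"
  shows "component_drawing H a \<inter> component_drawing H b = {}"
proof (rule ccontr)
  define K1 K2 where "K1 = component H a" and "K2 = component H b"
  have "a \<in> K1" "b \<in> K2"
    by (simp_all add: K1_def K2_def mem_component_iff)
  assume "component_drawing H a \<inter> component_drawing H b \<noteq> {}"
  then obtain z where "z = pos a \<or> (\<exists>g1\<in>H. g1 \<subseteq> K1 \<and> z \<in> path_image (\<gamma> g1))"
    and "z = pos b \<or> (\<exists>g2\<in>H. g2 \<subseteq> K2 \<and> z \<in> path_image (\<gamma> g2))"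
    by (auto simp: component_drawing_def K1_def K2_def)
  then have "K1 \<inter> K2 \<noteq> {}"
  proof (elim disjE bexE conjE)
    assume "z = pos a" "z = pos b"
    with inj_pos assms(2,3) \<open>a \<in> K1\<close> \<open>b \<in> K2\<close> show ?thesis
      by (auto dest: inj_onD)
  next
    fix g2
    assume "z = pos a" "g2 \<in> H" "g2 \<subseteq> K2" "z \<in> path_image (\<gamma> g2)"
    with edge_avoids_vertices assms(1,2) \<open>a \<in> K1\<close> show ?thesis
      by blast
  next
    fix g1
    assume "g1 \<in> H" "g1 \<subseteq> K1" "z \<in> path_image (\<gamma> g1)" "z = pos b"
    with edge_avoids_vertices assms(1,3) \<open>b \<in> K2\<close> show ?thesis
      by blast
  next
    fix g1 g2
    assume "g1 \<in> H" "g1 \<subseteq> K1" "z \<in> path_image (\<gamma> g1)"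
      and "g2 \<in> H" "g2 \<subseteq> K2" "z \<in> path_image (\<gamma> g2)"
    with edge_drawings_meet[of g1 g2] assms(1) show ?thesis
      by blast
  qed
  then show False
    using assms(4) rtrancl_edge_rel_join[of a _ H b] by (auto simp: K1_def K2_def mem_component_iff)
qed

lemma leaf_extended_path:
  assumes "k < length xs" "l < length xs" "path P"
    and "pathstart P = pos (xs ! k)" "pathfinish P = pos (xs ! l)" "path_image P \<subseteq> drawing"
  defines "G \<equiv> reversepath (\<delta> k) +++ (P +++ \<delta> l)"
  shows "path G" "pathstart G = of_real R * cis (\<theta> k)" "pathfinish G = of_real R * cis (\<theta> l)"
    "path_image G = path_image (\<delta> k) \<union> path_image P \<union> path_image (\<delta> l)"
    "path_image G \<subseteq> ball 0 R \<union> {pathstart G, pathfinish G}"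
proof -
  have joins: "pathfinish (reversepath (\<delta> k)) = pathstart (P +++ \<delta> l)" "pathfinish P = pathstart (\<delta> l)"
    using assms(1,2,4,5) leaf_arc_start by simp_all
  have "path (\<delta> k)" "path (\<delta> l)"
    using assms(1,2) leaf_arc arc_imp_path by blast+
  with joins \<open>path P\<close> show "path G"
    by (simp add: G_def)
  show ends: "pathstart G = of_real R * cis (\<theta> k)" "pathfinish G = of_real R * cis (\<theta> l)"
    using assms(1,2) leaf_arc_finish by (simp_all add: G_def)
  show image: "path_image G = path_image (\<delta> k) \<union> path_image P \<union> path_image (\<delta> l)"
    using joins by (auto simp: G_def path_image_join path_image_reversepath)
  have "path_image (\<delta> j) \<subseteq> ball 0 R \<union> {of_real R * cis (\<theta> j)}" if "j < length xs" for j
    using leaf_arc_inside[OF that] leaf_arc_finish[OF that] by auto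
  moreover have "path_image P \<subseteq> ball 0 R"
    using assms(6) drawing_in_ball by blast
  ultimately show "path_image G \<subseteq> ball 0 R \<union> {pathstart G, pathfinish G}"
    unfolding image ends using assms(1,2) by blast
qed

lemma interlaced_leaf_paths_intersect:
  assumes k: "k1 < k2" "k2 < k3" "k3 < k4" "k4 < length xs"
    and P: "path P" "pathstart P = pos (xs ! k1)" "pathfinish P = pos (xs ! k3)"
      "path_image P \<subseteq> drawing"
    and Q: "path Q" "pathstart Q = pos (xs ! k2)" "pathfinish Q = pos (xs ! k4)"
      "path_image Q \<subseteq> drawing"
  shows "path_image P \<inter> path_image Q \<noteq> {}"
proof -
  define G1 where "G1 = reversepath (\<delta> k1) +++ (P +++ \<delta> k3)"
  define G2 where "G2 = reversepath (\<delta> k2) +++ (Q +++ \<delta> k4)"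
  have "k1 < length xs" "k2 < length xs" "k3 < length xs"
    using k by simp_all
  note G1 = leaf_extended_path[OF \<open>k1 < length xs\<close> \<open>k3 < length xs\<close> P, folded G1_def]
  note G2 = leaf_extended_path[OF \<open>k2 < length xs\<close> \<open>k4 < length xs\<close> Q, folded G2_def]
  have "pathstart P \<in> ball 0 R"
    using pathstart_in_path_image[of P] P(4) drawing_in_ball by blast
  then have "0 < R"
    by (metis mem_ball zero_le_dist le_less_trans)
  moreover have "0 \<le> \<theta> k1" "\<theta> k1 < \<theta> k2" "\<theta> k2 < \<theta> k3" "\<theta> k3 < \<theta> k4" "\<theta> k4 < 2 * pi"
    using k leaf_angle_nonneg leaf_angle_mono leaf_angle_less by simp_all
  ultimately obtain z where "z \<in> path_image G1" "z \<in> path_image G2"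
    using disc_paths_intersect[OF _ _ _ _ _ _ G1(1) G2(1) G1(2,3) G2(2,3) G1(5) G2(5)] by blast
  then have z1: "z \<in> path_image (\<delta> k1) \<union> path_image P \<union> path_image (\<delta> k3)"
    and z2: "z \<in> path_image (\<delta> k2) \<union> path_image Q \<union> path_image (\<delta> k4)"
    using G1(4) G2(4) by simp_all
  have on_leaf: "z = pos (xs ! j)" if "j < length xs" "z \<in> path_image (\<delta> j)" "z \<in> drawing" for j
    using leaf_arc_meets_drawing[OF that(1)] that(2,3) by blast
  have "path_image (\<delta> k) \<inter> path_image (\<delta> l) = {}" if "k \<in> {k1, k3}" "l \<in> {k2, k4}" for k l
    using that k leaf_arcs_disjoint[of k l] leaf_arcs_disjoint[of l k] by (auto simp: Int_commute)
  then consider "z \<in> path_image P" "z \<in> path_image Q"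
    | "z \<in> path_image (\<delta> k1) \<union> path_image (\<delta> k3)" "z \<in> path_image Q"
    | "z \<in> path_image P" "z \<in> path_image (\<delta> k2) \<union> path_image (\<delta> k4)"
    using z1 z2 by blast
  then show ?thesis
  proof cases
    case 2
    then have "z \<in> drawing"
      using Q(4) by blast
    with 2(1) have "z = pos (xs ! k1) \<or> z = pos (xs ! k3)"
      using on_leaf \<open>k1 < length xs\<close> \<open>k3 < length xs\<close> by blast
    with 2 P(2,3) show ?thesis
      using pathstart_in_path_image[of P] pathfinish_in_path_image[of P] by auto
  next
    case 3
    then have "z \<in> drawing"
      using P(4) by blast
    with 3(2) have "z = pos (xs ! k2) \<or> z = pos (xs ! k4)"
      using on_leaf \<open>k2 < length xs\<close> \<open>k4 < length xs\<close> by blast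
    with 3 Q(2,3) show ?thesis
      using pathstart_in_path_image[of Q] pathfinish_in_path_image[of Q] by auto
  qed blast
qed

lemma interlaced_leaves_connected:
  assumes "H \<subseteq> E" "set xs \<subseteq> V"
    and k: "k1 < k2" "k2 < k3" "k3 < k4" "k4 < length xs"
    and "(xs ! k1, xs ! k3) \<in> (edge_rel H)\<^sup>*" "(xs ! k2, xs ! k4) \<in> (edge_rel H)\<^sup>*"
  shows "(xs ! k1, xs ! k2) \<in> (edge_rel H)\<^sup>*"
proof (rule ccontr)
  assume not_connected: "(xs ! k1, xs ! k2) \<notin> (edge_rel H)\<^sup>*"
  have V: "xs ! k1 \<in> V" "xs ! k2 \<in> V"
    using assms(2) k nth_mem by (metis less_trans subsetD)+
  obtain P where P: "path P" "pathstart P = pos (xs ! k1)" "pathfinish P = pos (xs ! k3)"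
    "path_image P \<subseteq> component_drawing H (xs ! k1)"
    using path_in_component_drawing[OF assms(1,7)] by blast
  obtain Q where Q: "path Q" "pathstart Q = pos (xs ! k2)" "pathfinish Q = pos (xs ! k4)"
    "path_image Q \<subseteq> component_drawing H (xs ! k2)"
    using path_in_component_drawing[OF assms(1,8)] by blast
  have "path_image P \<inter> path_image Q \<noteq> {}"
    using interlaced_leaf_paths_intersect[OF k P(1-3) _ Q(1-3)] P(4) Q(4)
      component_drawing_subset[OF assms(1)] V
    by blast
  moreover have "component_drawing H (xs ! k1) \<inter> component_drawing H (xs ! k2) = {}"
    by (rule component_drawings_disjoint[OF assms(1) V not_connected])
  ultimately show False
    using P(4) Q(4) by blast
qed


lemma circ_split_if_sides_connected:
  assumes "H \<subseteq> E" "set xs \<subseteq> V"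
    and sides: "\<And>p q. p \<in> set xs \<Longrightarrow> q \<in> set xs \<Longrightarrow>
      (p, q) \<in> (edge_rel H)\<^sup>* \<longleftrightarrow> (p \<in> C \<longleftrightarrow> q \<in> C)"
    and "set xs \<inter> C \<noteq> {}" "set xs - C \<noteq> {}"
  shows "\<exists>i j. i < length xs \<and> j < length xs \<and> i \<noteq> j \<and> {set xs \<inter> C, set xs - C} = circ_split xs i j"
proof (rule circ_split_if_noninterlaced)
  show "\<exists>k<length xs. xs ! k \<in> C" "\<exists>k<length xs. xs ! k \<notin> C"
    using assms(4,5) by (auto simp: in_set_conv_nth)
next
  fix k1 k2 k3 k4
  assume k: "k1 < k2" "k2 < k3" "k3 < k4" "k4 < length xs"
    and "(xs ! k1 \<in> C) = (xs ! k3 \<in> C)" "(xs ! k2 \<in> C) = (xs ! k4 \<in> C)"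
  moreover have leaves: "xs ! k \<in> set xs" if "k < length xs" for k
    using that by simp
  ultimately have "(xs ! k1, xs ! k3) \<in> (edge_rel H)\<^sup>*" "(xs ! k2, xs ! k4) \<in> (edge_rel H)\<^sup>*"
    using sides by simp_all
  then have "(xs ! k1, xs ! k2) \<in> (edge_rel H)\<^sup>*"
    by (rule interlaced_leaves_connected[OF assms(1,2) k])
  then show "(xs ! k1 \<in> C) = (xs ! k2 \<in> C)"
    using sides leaves k by simp
qed
end

lemma displayed_splits_congruent:
  assumes rn: "rooted_network V A r X" and "induced_circular_order V A X xs"
  shows "congruent (displayed_splits V A X) xs"
  unfolding congruent_def
proof
  fix s
  assume "s \<in> displayed_splits V A X"
  then obtain D u u' where dc: "deletion_choice A D" and "{u, u'} \<in> und_edges (A - D)"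
    and s: "s = {X \<inter> component (und_edges (A - D) - {{u, u'}}) u,
                 X - component (und_edges (A - D) - {{u, u'}}) u}"
    and sides: "X \<inter> component (und_edges (A - D) - {{u, u'}}) u \<noteq> {}"
      "X - component (und_edges (A - D) - {{u, u'}}) u \<noteq> {}"
    by (rule displayed_splitE[OF rn])
  define H where "H = und_edges (A - D) - {{u, u'}}"
  have "set xs = X" and "induces_circular_order V (und_edges A) xs"
    using assms(2) by (auto simp: induced_circular_order_def circular_order_def)
  then obtain pos \<gamma> \<delta> R \<theta> where outer: "outer_drawing V (und_edges A) xs pos \<gamma> \<delta> R \<theta>"
    by (blast elim: induces_circular_orderE)
  have "X \<subseteq> V"
    using rooted_networkD(5)[OF rn] by auto
  have "u \<in> V"
    using forest_edgeD[OF forest_deletion_choice[OF rn dc] \<open>{u, u'} \<in> _\<close>] by simp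
  have same_side: "(p, q) \<in> (edge_rel H)\<^sup>* \<longleftrightarrow> (p \<in> component H u \<longleftrightarrow> q \<in> component H u)"
    if "p \<in> set xs" "q \<in> set xs" for p q
    unfolding H_def
    by (rule rtrancl_edge_rel_remove_edge_iff)
       (use deletion_choice_connected[OF rn dc \<open>u \<in> V\<close>] that \<open>set xs = X\<close> \<open>X \<subseteq> V\<close> in auto)
  have "H \<subseteq> und_edges A"
    by (auto simp: H_def und_edges_def)
  have "\<exists>i j. i < length xs \<and> j < length xs \<and> i \<noteq> j \<and>
      {set xs \<inter> component H u, set xs - component H u} = circ_split xs i j"
    by (rule outer_drawing.circ_split_if_sides_connected[OF outer \<open>H \<subseteq> und_edges A\<close> _ same_side])
       (use sides \<open>set xs = X\<close> \<open>X \<subseteq> V\<close> in \<open>auto simp: H_def\<close>)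
  then show "\<exists>i j. i < length xs \<and> j < length xs \<and> i \<noteq> j \<and> s = circ_split xs i j"
    using s \<open>set xs = X\<close> by (simp add: H_def)
qed

theorem proposition2p9:
  fixes V :: "'v set" and A :: "('v \<times> 'v) set" and r :: 'v and X :: "'v set"
  assumes "rooted_network V A r X"
    and "outer_labeled_planar V A X"
  shows "circular_split_system X (displayed_splits V A X) \<and>
         (\<forall>xs. induced_circular_order V A X xs \<longrightarrow> congruent (displayed_splits V A X) xs)"
proof
  show congruent: "\<forall>xs. induced_circular_order V A X xs \<longrightarrow> congruent (displayed_splits V A X) xs"
    using displayed_splits_congruent[OF assms(1)] by blast
  obtain xs where "induced_circular_order V A X xs"
    using assms(2) by (auto simp: outer_labeled_planar_def)
  with congruent show "circular_split_system X (displayed_splits V A X)"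
    by (auto simp: circular_split_system_def induced_circular_order_def)
qed

end
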